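(* Let $C$ be a countable torsion abelian group and $A$ a countable abelian group. For a prime $p$ let $A_p\subseteq A$ and $C_p\subseteq C$ be the $p$-primary subgroups. Then $\mathrm{PExt}(C,A)$ and $\prod_{p\text{ prime}}\mathrm{PExt}(C_p,A_p)$ are Borel-definably isomorphic.
   Context: For countable $C,A$: $\mathsf Z(C,A)$ is the Polish group (closed in $A^{C\times C}$) of normalized symmetric 2-cocycles ($c(x,0)=0$, $c(x,y)=c(y,x)$, $c(y,z)-c(x+y,z)+c(x,y+z)-c(x,y)=0$), $\mathsf B(C,A)$ the subgroup of coboundaries $c(x,y)=\phi(y)-\phi(x+y)+\phi(x)$, $\mathsf B_{\mathrm w}(C,A)$ the subgroup of cocycles whose restriction to $S\times S$ is a coboundary for every finite $S\le C$; $\mathrm{PExt}(C,A)=\mathsf B_{\mathrm w}(C,A)/\mathsf B(C,A)$, a group with a Polish cover. The product of groups with a Polish cover $\hat G_p/N_p$ is $\prod_p\hat G_p/\prod_pN_p$. A homomorphism between groups with a Polish cover $\hat G/N\to\hat H/M$ is Borel-definable if it is induced by a Borel function $\hat G\to\hat H$; a Borel-definable isomorphism is a bijective Borel-definable homomorphism. *)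

theory Defs
  imports "HOL-Analysis.Analysis" "HOL-Computational_Algebra.Primes"
begin

text \<open>Abelian groups are represented as subsets of an ambient type of class ab_group_add.\<close>

definition subgrp :: "'c::ab_group_add set \<Rightarrow> bool" where
  "subgrp C \<longleftrightarrow> 0 \<in> C \<and> (\<forall>x\<in>C. \<forall>y\<in>C. x + y \<in> C) \<and> (\<forall>x\<in>C. - x \<in> C)"

definition nsmul :: "nat \<Rightarrow> 'c::ab_group_add \<Rightarrow> 'c" where
  "nsmul n x = (((+) x) ^^ n) 0"

definition torsion_grp :: "'c::ab_group_add set \<Rightarrow> bool" where
  "torsion_grp C \<longleftrightarrow> (\<forall>x\<in>C. \<exists>n>0. nsmul n x = 0)"

definition primary :: "'c::ab_group_add set \<Rightarrow> nat \<Rightarrow> 'c set" where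
  "primary C p = {x \<in> C. \<exists>k. nsmul (p ^ k) x = 0}"

definition zcoc :: "'c::ab_group_add set \<Rightarrow> 'a::ab_group_add set \<Rightarrow> ('c \<times> 'c \<Rightarrow> 'a) set" where
  "zcoc C A = {c \<in> (C \<times> C) \<rightarrow>\<^sub>E A.
      (\<forall>x\<in>C. c (x, 0) = 0) \<and> (\<forall>x\<in>C. \<forall>y\<in>C. c (x, y) = c (y, x)) \<and>
      (\<forall>x\<in>C. \<forall>y\<in>C. \<forall>z\<in>C. c (y, z) - c (x + y, z) + c (x, y + z) - c (x, y) = 0)}"

definition is_cobd_on :: "'c::ab_group_add set \<Rightarrow> 'a::ab_group_add set \<Rightarrow> ('c \<times> 'c \<Rightarrow> 'a) \<Rightarrow> bool" where
  "is_cobd_on S A c \<longleftrightarrow> (\<exists>\<phi>. (\<forall>x\<in>S. \<phi> x \<in> A) \<and>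
      (\<forall>x\<in>S. \<forall>y\<in>S. c (x, y) = \<phi> y - \<phi> (x + y) + \<phi> x))"

definition bcoc :: "'c::ab_group_add set \<Rightarrow> 'a::ab_group_add set \<Rightarrow> ('c \<times> 'c \<Rightarrow> 'a) set" where
  "bcoc C A = {c \<in> zcoc C A. is_cobd_on C A c}"

definition bwcoc :: "'c::ab_group_add set \<Rightarrow> 'a::ab_group_add set \<Rightarrow> ('c \<times> 'c \<Rightarrow> 'a) set" where
  "bwcoc C A = {c \<in> zcoc C A. \<forall>S. finite S \<and> subgrp S \<and> S \<subseteq> C \<longrightarrow> is_cobd_on S A c}"

text \<open>The Polish space A^(C x C) with its Borel sigma-algebra (product of discrete spaces).\<close>
definition cocM :: "'c::ab_group_add set \<Rightarrow> 'a::ab_group_add set \<Rightarrow> ('c \<times> 'c \<Rightarrow> 'a) measure" where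
  "cocM C A = PiM (C \<times> C) (\<lambda>_. count_space A)"

definition cadd :: "'c::ab_group_add set \<Rightarrow> ('c \<times> 'c \<Rightarrow> 'a::ab_group_add) \<Rightarrow> ('c \<times> 'c \<Rightarrow> 'a) \<Rightarrow> ('c \<times> 'c \<Rightarrow> 'a)" where
  "cadd C c d = (\<lambda>z\<in>C \<times> C. c z + d z)"

definition csub :: "'c::ab_group_add set \<Rightarrow> ('c \<times> 'c \<Rightarrow> 'a::ab_group_add) \<Rightarrow> ('c \<times> 'c \<Rightarrow> 'a) \<Rightarrow> ('c \<times> 'c \<Rightarrow> 'a)" where
  "csub C c d = (\<lambda>z\<in>C \<times> C. c z - d z)"

text \<open>The product over primes p of the groups with Polish cover PExt(C_p,A_p).\<close>
definition primes_set :: "nat set" where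
  "primes_set = {p. prime p}"

definition prodM :: "'c::ab_group_add set \<Rightarrow> 'a::ab_group_add set \<Rightarrow> (nat \<Rightarrow> 'c \<times> 'c \<Rightarrow> 'a) measure" where
  "prodM C A = PiM primes_set (\<lambda>p. cocM (primary C p) (primary A p))"

definition prod_bw :: "'c::ab_group_add set \<Rightarrow> 'a::ab_group_add set \<Rightarrow> (nat \<Rightarrow> 'c \<times> 'c \<Rightarrow> 'a) set" where
  "prod_bw C A = (\<Pi>\<^sub>E p\<in>primes_set. bwcoc (primary C p) (primary A p))"

definition prod_b :: "'c::ab_group_add set \<Rightarrow> 'a::ab_group_add set \<Rightarrow> (nat \<Rightarrow> 'c \<times> 'c \<Rightarrow> 'a) set" where
  "prod_b C A = (\<Pi>\<^sub>E p\<in>primes_set. bcoc (primary C p) (primary A p))"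

definition padd :: "'c::ab_group_add set \<Rightarrow> (nat \<Rightarrow> 'c \<times> 'c \<Rightarrow> 'a::ab_group_add) \<Rightarrow> (nat \<Rightarrow> 'c \<times> 'c \<Rightarrow> 'a) \<Rightarrow> (nat \<Rightarrow> 'c \<times> 'c \<Rightarrow> 'a)" where
  "padd C F G = (\<lambda>p\<in>primes_set. cadd (primary C p) (F p) (G p))"

definition psub :: "'c::ab_group_add set \<Rightarrow> (nat \<Rightarrow> 'c \<times> 'c \<Rightarrow> 'a::ab_group_add) \<Rightarrow> (nat \<Rightarrow> 'c \<times> 'c \<Rightarrow> 'a) \<Rightarrow> (nat \<Rightarrow> 'c \<times> 'c \<Rightarrow> 'a)" where
  "psub C F G = (\<lambda>p\<in>primes_set. csub (primary C p) (F p) (G p))"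

text \<open>Borel-definable isomorphism between groups with a Polish cover G1/N1 and G2/N2,
  where G_i is a Borel subset of the Polish space (measurable space) M_i, with group
  operations add_i, sub_i.\<close>
definition bdef_iso ::
  "'x measure \<Rightarrow> 'x set \<Rightarrow> 'x set \<Rightarrow> ('x \<Rightarrow> 'x \<Rightarrow> 'x) \<Rightarrow> ('x \<Rightarrow> 'x \<Rightarrow> 'x) \<Rightarrow>
   'y measure \<Rightarrow> 'y set \<Rightarrow> 'y set \<Rightarrow> ('y \<Rightarrow> 'y \<Rightarrow> 'y) \<Rightarrow> ('y \<Rightarrow> 'y \<Rightarrow> 'y) \<Rightarrow>
   ('x \<Rightarrow> 'y) \<Rightarrow> bool" where
  "bdef_iso M1 G1 N1 add1 sub1 M2 G2 N2 add2 sub2 f \<longleftrightarrow>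
     f \<in> measurable (restrict_space M1 G1) M2 \<and>
     (\<forall>x\<in>G1. f x \<in> G2) \<and>
     (\<forall>x\<in>G1. \<forall>y\<in>G1. sub1 x y \<in> N1 \<longleftrightarrow> sub2 (f x) (f y) \<in> N2) \<and>
     (\<forall>x\<in>G1. \<forall>y\<in>G1. sub2 (f (add1 x y)) (add2 (f x) (f y)) \<in> N2) \<and>
     (\<forall>z\<in>G2. \<exists>x\<in>G1. sub2 z (f x) \<in> N2)"

end

theory Submission
  imports Defs
begin

text \<open>Every torsion element is the sum of its primary components, so \<open>C\<close> is the direct sum of
  the \<open>C\<^sub>p\<close>. A weak coboundary \<open>c\<close> on \<open>C\<close> is sent to the family of its restrictions to
  \<open>C\<^sub>p \<times> C\<^sub>p\<close>, each corrected by a coboundary so that it takes values in \<open>A\<^sub>p\<close>; every entry of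
  the image depends on finitely many values of \<open>c\<close>, so the map is Borel. The corrections are
  additive up to elements of \<open>A\<^sub>p\<close>, which makes the map a homomorphism modulo coboundaries.
  It is injective because coboundaries on all the \<open>C\<^sub>p\<close> glue, prime by prime, to a coboundary
  on \<open>C\<close>, and surjective because a family \<open>(F\<^sub>p)\<close> is the image of
  \<open>c(x, y) = \<Sum>\<^sub>p F\<^sub>p(x\<^sub>p, y\<^sub>p)\<close>.\<close>

lemma nsmul_zero_left [simp]: "nsmul 0 x = 0"
  by (simp add: nsmul_def)

lemma nsmul_Suc: "nsmul (Suc n) x = x + nsmul n x"
  by (simp add: nsmul_def)

lemma nsmul_one [simp]: "nsmul (Suc 0) x = x"
  by (simp add: nsmul_def)

lemma nsmul_add_left: "nsmul (m + n) x = nsmul m x + nsmul n x"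
  by (induction m) (simp_all add: nsmul_Suc add.assoc)

lemma nsmul_mult: "nsmul (m * n) x = nsmul m (nsmul n x)"
  by (induction m) (simp_all add: nsmul_Suc nsmul_add_left)

lemma nsmul_zero_right [simp]: "nsmul n 0 = 0"
  by (induction n) (simp_all add: nsmul_Suc)

lemma nsmul_add_right: "nsmul n (x + y) = nsmul n x + nsmul n y"
  by (induction n) (simp_all add: nsmul_Suc algebra_simps)

lemma nsmul_minus_right: "nsmul n (- x) = - nsmul n x"
  by (induction n) (simp_all add: nsmul_Suc)

lemma nsmul_diff_right: "nsmul n (x - y) = nsmul n x - nsmul n y"
  using nsmul_add_right[of n x "- y"] by (simp add: nsmul_minus_right)

lemma nsmul_dvd_eq_0: "m dvd n \<Longrightarrow> nsmul m x = 0 \<Longrightarrow> nsmul n x = 0"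
  by (auto simp: nsmul_mult mult.commute[of m] elim!: dvdE)

lemma nsmul_mod:
  assumes "nsmul n x = 0"
  shows "nsmul i x = nsmul (i mod n) x"
proof -
  have "nsmul i x = nsmul (i div n * n) x + nsmul (i mod n) x"
    by (simp add: nsmul_add_left[symmetric])
  then show ?thesis
    by (simp add: nsmul_mult assms)
qed

lemma minus_nsmul_eq:
  assumes "nsmul n x = 0" "0 < n"
  shows "- nsmul i x = nsmul (i * (n - 1)) x"
proof (rule minus_unique)
  have "i + i * (n - 1) = i * n"
    using assms(2) by (cases n) simp_all
  then have "nsmul i x + nsmul (i * (n - 1)) x = nsmul (i * n) x"
    by (simp only: nsmul_add_left[symmetric])
  then show "nsmul i x + nsmul (i * (n - 1)) x = 0"
    using assms(1) by (simp add: nsmul_mult)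
qed

lemma nsmul_coprime_eq_0:
  assumes "nsmul a x = 0" "nsmul b x = 0" "coprime a b"
  shows "x = 0"
proof (cases "a = 0")
  case True
  with assms show ?thesis by simp
next
  case False
  then obtain u v where "a * u = b * v + gcd a b"
    using bezout_nat by blast
  then have "nsmul (a * u) x = nsmul (b * v) x + nsmul (gcd a b) x"
    by (simp add: nsmul_add_left)
  with assms show ?thesis
    by (simp add: nsmul_mult mult.commute[of a] mult.commute[of b])
qed

lemma subgrp_zero: "subgrp C \<Longrightarrow> 0 \<in> C"
  unfolding subgrp_def by blast

lemma subgrp_add: "subgrp C \<Longrightarrow> x \<in> C \<Longrightarrow> y \<in> C \<Longrightarrow> x + y \<in> C"
  unfolding subgrp_def by blast

lemma subgrp_minus: "subgrp C \<Longrightarrow> x \<in> C \<Longrightarrow> - x \<in> C"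
  unfolding subgrp_def by blast

lemma subgrp_diff: "subgrp C \<Longrightarrow> x \<in> C \<Longrightarrow> y \<in> C \<Longrightarrow> x - y \<in> C"
  by (metis diff_conv_add_uminus subgrp_add subgrp_minus)

lemma subgrp_nsmul: "subgrp C \<Longrightarrow> x \<in> C \<Longrightarrow> nsmul n x \<in> C"
  by (induction n) (simp_all add: nsmul_Suc subgrp_add subgrp_zero)

lemma subgrp_sum: "subgrp C \<Longrightarrow> (\<And>i. i \<in> I \<Longrightarrow> f i \<in> C) \<Longrightarrow> sum f I \<in> C"
  by (induction I rule: infinite_finite_induct) (simp_all add: subgrp_zero subgrp_add)

lemma subgrp_image_additive:
  assumes "subgrp S" "\<And>x y. x \<in> S \<Longrightarrow> y \<in> S \<Longrightarrow> f (x + y) = f x + f y"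
  shows "subgrp (f ` S)"
proof -
  have f0: "f 0 = 0"
    using assms(2)[of 0 0] subgrp_zero[OF assms(1)] by simp
  show ?thesis
    unfolding subgrp_def
  proof (intro conjI ballI)
    show "0 \<in> f ` S"
      using f0 subgrp_zero[OF assms(1)] by (blast intro: sym)
  next
    fix a b assume "a \<in> f ` S" "b \<in> f ` S"
    then obtain x y where "a = f x" "b = f y" "x \<in> S" "y \<in> S"
      by blast
    then have "a + b = f (x + y)"
      using assms(2) by simp
    then show "a + b \<in> f ` S"
      using subgrp_add[OF assms(1) \<open>x \<in> S\<close> \<open>y \<in> S\<close>] by blast
  next
    fix a assume "a \<in> f ` S"
    then obtain x where x: "a = f x" "x \<in> S"
      by blast
    then have "f x + f (- x) = 0"
      using f0 assms(2)[of "- x" x] subgrp_minus[OF assms(1)] by (simp add: add.commute)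
    then have "- a = f (- x)"
      unfolding x(1) by (rule minus_unique)
    then show "- a \<in> f ` S"
      using x(2) subgrp_minus[OF assms(1)] by blast
  qed
qed

lemma finite_nsmul_combinations:
  assumes "nsmul n x = 0" "0 < n" "nsmul m y = 0" "0 < m"
  shows "finite {nsmul i x + nsmul j y |i j. True}"
proof (rule finite_subset)
  show "{nsmul i x + nsmul j y |i j. True} \<subseteq> (\<lambda>(i, j). nsmul i x + nsmul j y) ` ({..<n} \<times> {..<m})"
  proof
    fix z assume "z \<in> {nsmul i x + nsmul j y |i j. True}"
    then obtain i j where "z = nsmul i x + nsmul j y"
      by blast
    then have "z = (\<lambda>(i, j). nsmul i x + nsmul j y) (i mod n, j mod m)"
      using nsmul_mod[OF assms(1)] nsmul_mod[OF assms(3)] by simp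
    moreover have "(i mod n, j mod m) \<in> {..<n} \<times> {..<m}"
      using assms by simp
    ultimately show "z \<in> (\<lambda>(i, j). nsmul i x + nsmul j y) ` ({..<n} \<times> {..<m})"
      by blast
  qed
qed simp

lemma finite_subgrp_containing:
  assumes U: "subgrp U" "x \<in> U" "y \<in> U"
    and tors: "nsmul n x = 0" "0 < n" "nsmul m y = 0" "0 < m"
  obtains S where "finite S" "subgrp S" "S \<subseteq> U" "x \<in> S" "y \<in> S"
proof
  define S where "S = {nsmul i x + nsmul j y |i j. True}"
  show "finite S"
    unfolding S_def using finite_nsmul_combinations[OF tors] .
  show "subgrp S"
    unfolding subgrp_def
  proof (intro conjI ballI)
    have "0 = nsmul 0 x + nsmul 0 y"
      by simp
    then show "0 \<in> S"
      unfolding S_def by blast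
    fix a b assume "a \<in> S" "b \<in> S"
    then obtain i j i' j' where "a = nsmul i x + nsmul j y" "b = nsmul i' x + nsmul j' y"
      unfolding S_def by blast
    then have "a + b = nsmul (i + i') x + nsmul (j + j') y" "- a = nsmul (i * (n - 1)) x + nsmul (j * (m - 1)) y"
      using minus_nsmul_eq[OF tors(1,2), of i] minus_nsmul_eq[OF tors(3,4), of j]
      by (simp_all add: nsmul_add_left algebra_simps)
    then show "a + b \<in> S" "- a \<in> S"
      unfolding S_def by blast+
  qed
  show "S \<subseteq> U"
    unfolding S_def using U by (auto intro: subgrp_add subgrp_nsmul)
  have "x = nsmul 1 x + nsmul 0 y" "y = nsmul 0 x + nsmul 1 y"
    by simp_all
  then show "x \<in> S" "y \<in> S"
    unfolding S_def by blast+
qed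

lemma primary_subset: "primary C p \<subseteq> C"
  by (auto simp: primary_def)

lemma primaryI: "x \<in> C \<Longrightarrow> nsmul (p ^ k) x = 0 \<Longrightarrow> x \<in> primary C p"
  by (auto simp: primary_def)

lemma primary_subgrp:
  assumes "subgrp C"
  shows "subgrp (primary C p)"
  unfolding subgrp_def
proof (intro conjI ballI)
  show "0 \<in> primary C p"
    using assms by (auto intro: primaryI[of _ _ _ 0] subgrp_zero)
next
  fix x y assume "x \<in> primary C p" "y \<in> primary C p"
  then obtain k l where x: "x \<in> C" "nsmul (p ^ k) x = 0" and y: "y \<in> C" "nsmul (p ^ l) y = 0"
    by (auto simp: primary_def)
  have "nsmul (p ^ (k + l)) x = 0" "nsmul (p ^ (k + l)) y = 0"
    using nsmul_dvd_eq_0[OF _ x(2)] nsmul_dvd_eq_0[OF _ y(2)] by (simp_all add: le_imp_power_dvd)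
  then have "nsmul (p ^ (k + l)) (x + y) = 0"
    by (simp add: nsmul_add_right)
  then show "x + y \<in> primary C p"
    using assms x(1) y(1) by (blast intro: primaryI subgrp_add)
next
  fix x assume "x \<in> primary C p"
  then obtain k where "x \<in> C" "nsmul (p ^ k) x = 0"
    by (auto simp: primary_def)
  then show "- x \<in> primary C p"
    using primaryI[of "- x" C p k] subgrp_minus[OF assms] by (simp add: nsmul_minus_right)
qed

lemma primary_torsion:
  assumes "x \<in> primary C p" "prime p"
  obtains n where "0 < n" "nsmul n x = 0"
proof -
  obtain k where "nsmul (p ^ k) x = 0"
    using assms(1) by (auto simp: primary_def)
  moreover have "0 < p ^ k"
    using assms(2) by (simp add: prime_gt_0_nat)
  ultimately show thesis
    using that by blast
qed

lemma primary_if_nsmul_primary: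
  assumes "a \<in> A" "nsmul (p ^ k) a \<in> primary A p"
  shows "a \<in> primary A p"
proof -
  obtain j where "nsmul (p ^ j) (nsmul (p ^ k) a) = 0"
    using assms(2) by (auto simp: primary_def)
  then show ?thesis
    using assms(1) by (auto intro: primaryI[of _ _ _ "j + k"] simp: power_add nsmul_mult)
qed

section \<open>Primary decomposition of torsion elements\<close>

lemma coprime_prime_iff_not_dvd:
  fixes m p :: nat
  assumes "prime p"
  shows "coprime m p \<longleftrightarrow> \<not> p dvd m"
proof
  show "coprime m p \<Longrightarrow> \<not> p dvd m"
    using assms by (auto dest: coprime_common_divisor)
  show "\<not> p dvd m \<Longrightarrow> coprime m p"
    using prime_imp_coprime[OF assms] by (simp add: ac_simps)
qed

lemma prime_power_split:
  fixes n p :: nat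
  assumes "0 < n" "prime p"
  obtains a m where "n = p ^ a * m" "coprime m p" "0 < m"
proof -
  have "n \<noteq> 0" "\<not> is_unit p"
    using assms by auto
  then obtain m where m: "n = p ^ multiplicity p n * m" "\<not> p dvd m"
    by (rule multiplicity_decompose')
  moreover have "0 < m"
    using m(1) assms(1) by (auto intro: gr0I)
  ultimately show thesis
    using that coprime_prime_iff_not_dvd[OF assms(2)] by blast
qed

definition primary_comp :: "'c::ab_group_add set \<Rightarrow> nat \<Rightarrow> 'c \<Rightarrow> 'c" where
  "primary_comp C p x = (THE y. y \<in> primary C p \<and> (\<exists>m. coprime m p \<and> nsmul m (x - y) = 0))"

lemma primary_comp_eq:
  assumes y: "y \<in> primary C p" "coprime m p" "nsmul m (x - y) = 0"
  shows "primary_comp C p x = y"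
  unfolding primary_comp_def
proof (rule the_equality)
  fix y' assume "y' \<in> primary C p \<and> (\<exists>m. coprime m p \<and> nsmul m (x - y') = 0)"
  then obtain k l m' where "nsmul (p ^ k) y = 0" "nsmul (p ^ l) y' = 0"
    and m': "coprime m' p" "nsmul m' (x - y') = 0"
    using y(1) by (auto simp: primary_def)
  then have "nsmul (p ^ (k + l)) (y' - y) = 0"
    using nsmul_dvd_eq_0[of "p ^ k" "p ^ (k + l)" y] nsmul_dvd_eq_0[of "p ^ l" "p ^ (k + l)" y']
    by (simp add: le_imp_power_dvd nsmul_diff_right)
  moreover have "nsmul (m * m') (y' - y) = nsmul (m * m') (x - y) - nsmul (m * m') (x - y')"
    by (simp add: nsmul_diff_right)
  then have "nsmul (m * m') (y' - y) = 0"
    using nsmul_dvd_eq_0[OF _ y(3), of "m * m'"] nsmul_dvd_eq_0[OF _ m'(2), of "m * m'"] by simp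
  moreover have "coprime (p ^ (k + l)) (m * m')"
    using y(2) m'(1) by (simp add: coprime_commute)
  ultimately have "y' - y = 0"
    by (rule nsmul_coprime_eq_0)
  then show "y' = y"
    by simp
qed (use y in blast)

lemma primary_comp_exists:
  assumes "subgrp C" "x \<in> C" "nsmul (p ^ a * m) x = 0" "coprime m p" "0 < m"
  obtains y where "y \<in> primary C p" "nsmul m (x - y) = 0"
proof -
  obtain u v where uv: "m * u = p ^ a * v + 1"
    using bezout_nat[of m "p ^ a"] assms(4,5) by (auto simp: coprime_commute)
  define y where "y = nsmul (m * u) x"
  have "nsmul (p ^ a) y = nsmul (u * (p ^ a * m)) x"
    unfolding y_def by (simp add: nsmul_mult[symmetric] ac_simps)
  with assms(3) have "nsmul (p ^ a) y = 0"
    by (simp add: nsmul_mult)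
  then have "y \<in> primary C p"
    using assms(1,2) by (auto intro: primaryI subgrp_nsmul simp: y_def)
  moreover have "m * (m * u) = v * (p ^ a * m) + m"
    using uv by (simp add: algebra_simps)
  then have "nsmul m y = nsmul m x"
    using assms(3) by (simp add: y_def nsmul_mult[symmetric] nsmul_add_left) (simp add: nsmul_mult)
  then have "nsmul m (x - y) = 0"
    by (simp add: nsmul_diff_right)
  ultimately show thesis
    using that by blast
qed

definition annih :: "'c::ab_group_add \<Rightarrow> nat" where
  "annih x = (SOME n. 0 < n \<and> nsmul n x = 0)"

definition primary_part :: "'c::ab_group_add set \<Rightarrow> nat \<Rightarrow> 'c \<Rightarrow> 'c" where
  "primary_part C N x = (\<Sum>p | prime p \<and> p \<le> N. primary_comp C p x)"

lemma sum_primes_le_eq: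
  fixes M N :: nat
  assumes "\<And>p. prime p \<Longrightarrow> M < p \<Longrightarrow> g p = 0" "M \<le> N"
  shows "(\<Sum>p | prime p \<and> p \<le> N. g p) = (\<Sum>p | prime p \<and> p \<le> M. g p)"
proof (rule sum.mono_neutral_right)
  show "\<forall>p\<in>{p. prime p \<and> p \<le> N} - {p. prime p \<and> p \<le> M}. g p = 0"
    using assms(1) by (simp add: not_le)
qed (use assms(2) in auto)

locale torsion_subgrp =
  fixes C :: "'c::ab_group_add set"
  assumes C_subgrp: "subgrp C" and C_torsion: "torsion_grp C"
begin

lemma annih: "x \<in> C \<Longrightarrow> 0 < annih x \<and> nsmul (annih x) x = 0"
  unfolding annih_def by (rule someI_ex) (use C_torsion in \<open>auto simp: torsion_grp_def\<close>)

lemma primary_comp: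
  assumes "x \<in> C" "prime p"
  shows "primary_comp C p x \<in> primary C p"
    and "\<exists>m. coprime m p \<and> nsmul m (x - primary_comp C p x) = 0"
proof -
  obtain a m where am: "annih x = p ^ a * m" "coprime m p" "0 < m"
    using prime_power_split annih[OF assms(1)] assms(2) by blast
  obtain y where y: "y \<in> primary C p" "nsmul m (x - y) = 0"
    using primary_comp_exists[OF C_subgrp assms(1) _ am(2,3)] annih[OF assms(1)] am(1) by auto
  have "primary_comp C p x = y"
    using primary_comp_eq[OF y(1) am(2) y(2)] .
  with y am show "primary_comp C p x \<in> primary C p"
    and "\<exists>m. coprime m p \<and> nsmul m (x - primary_comp C p x) = 0"
    by auto
qed

lemma primary_comp_in: "x \<in> C \<Longrightarrow> prime p \<Longrightarrow> primary_comp C p x \<in> C"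
  using primary_comp(1) primary_subset by blast

lemma primary_comp_add:
  assumes "x \<in> C" "y \<in> C" "prime p"
  shows "primary_comp C p (x + y) = primary_comp C p x + primary_comp C p y"
proof -
  obtain m m' where m: "coprime m p" "nsmul m (x - primary_comp C p x) = 0"
    and m': "coprime m' p" "nsmul m' (y - primary_comp C p y) = 0"
    using primary_comp(2) assms by metis
  have "nsmul (m * m') ((x + y) - (primary_comp C p x + primary_comp C p y))
      = nsmul (m * m') (x - primary_comp C p x) + nsmul (m * m') (y - primary_comp C p y)"
    by (simp add: nsmul_add_right[symmetric] algebra_simps)
  also have "\<dots> = 0"
    using nsmul_dvd_eq_0[OF _ m(2), of "m * m'"] nsmul_dvd_eq_0[OF _ m'(2), of "m * m'"] by simp
  finally show ?thesis
    using m m' assms primary_comp(1) subgrp_add[OF primary_subgrp[OF C_subgrp]]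
    by (intro primary_comp_eq) auto
qed

lemma primary_comp_eq_0: "nsmul m x = 0 \<Longrightarrow> coprime m p \<Longrightarrow> primary_comp C p x = 0"
  using primary_comp_eq[of 0 C p m x] subgrp_zero[OF primary_subgrp[OF C_subgrp]] by simp

lemma primary_comp_zero [simp]: "primary_comp C p 0 = 0"
  by (rule primary_comp_eq_0[of 1]) simp_all

lemma primary_comp_minus:
  assumes "x \<in> C" "prime p"
  shows "primary_comp C p (- x) = - primary_comp C p x"
  using primary_comp_add[of x "- x" p] assms subgrp_minus[OF C_subgrp]
  by (simp add: eq_neg_iff_add_eq_0 add.commute)

lemma primary_comp_diff:
  assumes "x \<in> C" "y \<in> C" "prime p"
  shows "primary_comp C p (x - y) = primary_comp C p x - primary_comp C p y"
  using primary_comp_add[of x "- y" p] primary_comp_minus[of y p] assms subgrp_minus[OF C_subgrp]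
  by simp

lemma primary_comp_self: "z \<in> primary C p \<Longrightarrow> primary_comp C p z = z"
  by (rule primary_comp_eq[of _ _ _ 1]) simp_all

lemma primary_comp_other:
  assumes "z \<in> primary C q" "prime p" "prime q" "p \<noteq> q"
  shows "primary_comp C p z = 0"
proof -
  obtain k where "nsmul (q ^ k) z = 0"
    using assms(1) by (auto simp: primary_def)
  moreover have "coprime (q ^ k) p"
    using primes_coprime[OF assms(3,2)] assms(4) by simp
  ultimately show ?thesis
    by (rule primary_comp_eq_0)
qed

lemma primary_comp_eq_0_if_annih_less:
  assumes "x \<in> C" "prime p" "annih x < p"
  shows "primary_comp C p x = 0"
proof (rule primary_comp_eq_0)
  show "nsmul (annih x) x = 0"
    using annih[OF assms(1)] by simp
  have "\<not> p dvd annih x"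
    using annih[OF assms(1)] assms(3) by (auto dest: dvd_imp_le)
  then show "coprime (annih x) p"
    using coprime_prime_iff_not_dvd[OF assms(2)] by blast
qed

lemma primary_comp_cofactor:
  assumes "x \<in> C" "nsmul n x = 0" "0 < n" "prime p" "p dvd n"
  obtains m where "m < n" "0 < m" "m dvd n" "\<not> p dvd m" "nsmul m (x - primary_comp C p x) = 0"
proof -
  obtain a m where n: "n = p ^ a * m" "coprime m p" "0 < m"
    using prime_power_split assms(3,4) by metis
  have "\<not> p dvd m"
    using n(2) coprime_prime_iff_not_dvd[OF assms(4)] by blast
  then have "a \<noteq> 0"
    using n(1) assms(5) by (metis mult_1 power_0)
  then have "1 < p ^ a"
    using prime_gt_1_nat[OF assms(4)] one_less_power[of p a] by simp
  then have "m < n"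
    using n by simp
  obtain y where y: "y \<in> primary C p" "nsmul m (x - y) = 0"
    using primary_comp_exists[OF C_subgrp assms(1) _ n(2,3)] assms(2) n(1) by metis
  show thesis
  proof (rule that)
    show "m < n" "0 < m" "\<not> p dvd m"
      by fact+
    show "m dvd n"
      using n(1) by simp
    show "nsmul m (x - primary_comp C p x) = 0"
      using primary_comp_eq[OF y(1) n(2) y(2)] y(2) by simp
  qed
qed

lemma sum_primary_comp:
  assumes "x \<in> C" "nsmul n x = 0" "0 < n" "finite Q" "\<forall>q\<in>Q. prime q"
    and "\<forall>q. prime q \<and> q dvd n \<longrightarrow> q \<in> Q"
  shows "(\<Sum>q\<in>Q. primary_comp C q x) = x"
  using assms
proof (induction n arbitrary: x Q rule: less_induct)
  case (less n)
  show ?case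
  proof (cases "n = 1")
    case True
    with less.prems show ?thesis
      by simp
  next
    case False
    then obtain p where p: "prime p" "p dvd n"
      using prime_factor_nat by blast
    then obtain m where m: "m < n" "0 < m" "m dvd n" "\<not> p dvd m"
      and killed: "nsmul m (x - primary_comp C p x) = 0"
      using primary_comp_cofactor less.prems(1-3) by metis
    define y where "y = primary_comp C p x"
    have y: "y \<in> primary C p" "y \<in> C"
      unfolding y_def using primary_comp less.prems(1) p(1) primary_comp_in by blast+
    have "(\<Sum>q\<in>Q - {p}. primary_comp C q (x - y)) = x - y"
    proof (rule less.IH[OF m(1) _ killed[folded y_def] m(2)])
      show "x - y \<in> C"
        using less.prems(1) y(2) subgrp_diff[OF C_subgrp] by blast
      show "\<forall>q. prime q \<and> q dvd m \<longrightarrow> q \<in> Q - {p}"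
        using less.prems(6) m(3,4) dvd_trans by blast
    qed (use less.prems in auto)
    moreover have "primary_comp C q (x - y) = primary_comp C q x" if "q \<in> Q - {p}" for q
      using that less.prems primary_comp_diff[OF less.prems(1) y(2)] primary_comp_other[OF y(1)] p
      by auto
    moreover have "p \<in> Q"
      using p less.prems(6) by blast
    ultimately show ?thesis
      using less.prems(4) by (simp add: sum.remove[of Q p] y_def)
  qed
qed

lemma primary_part_eq_self: "x \<in> C \<Longrightarrow> annih x \<le> N \<Longrightarrow> primary_part C N x = x"
  unfolding primary_part_def using annih
  by (intro sum_primary_comp[of _ "annih x"]) (auto dest: dvd_imp_le)

lemma primary_part_in: "x \<in> C \<Longrightarrow> primary_part C N x \<in> C"
  unfolding primary_part_def by (rule subgrp_sum[OF C_subgrp]) (auto intro: primary_comp_in)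

lemma primary_part_add: "x \<in> C \<Longrightarrow> y \<in> C \<Longrightarrow> primary_part C N (x + y) = primary_part C N x + primary_part C N y"
  unfolding primary_part_def by (simp add: primary_comp_add sum.distrib)

lemma primary_part_0 [simp]: "primary_part C 0 x = 0"
proof -
  have "{p. prime p \<and> p \<le> (0::nat)} = {}"
    by auto
  then show ?thesis
    unfolding primary_part_def by (simp only: sum.empty)
qed

lemma primary_part_Suc:
  "primary_part C (Suc N) x = primary_part C N x + (if prime (Suc N) then primary_comp C (Suc N) x else 0)"
proof -
  have "{p. prime p \<and> p \<le> Suc N} = (if prime (Suc N) then insert (Suc N) else id) {p. prime p \<and> p \<le> N}"
    by (auto simp: le_Suc_eq)
  then show ?thesis
    unfolding primary_part_def by (simp add: add.commute)
qed

end

lemma zcoc_in: "c \<in> zcoc C A \<Longrightarrow> x \<in> C \<Longrightarrow> y \<in> C \<Longrightarrow> c (x, y) \<in> A"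
  unfolding zcoc_def by blast

lemma zcoc_right_zero: "c \<in> zcoc C A \<Longrightarrow> x \<in> C \<Longrightarrow> c (x, 0) = 0"
  unfolding zcoc_def by blast

lemma zcoc_commute: "c \<in> zcoc C A \<Longrightarrow> x \<in> C \<Longrightarrow> y \<in> C \<Longrightarrow> c (x, y) = c (y, x)"
  unfolding zcoc_def by blast

lemma zcoc_cocycle:
  "c \<in> zcoc C A \<Longrightarrow> x \<in> C \<Longrightarrow> y \<in> C \<Longrightarrow> z \<in> C \<Longrightarrow> c (y, z) - c (x + y, z) + c (x, y + z) - c (x, y) = 0"
  unfolding zcoc_def by blast

lemma zcoc_zero_zero: "subgrp C \<Longrightarrow> c \<in> zcoc C A \<Longrightarrow> c (0, 0) = 0"
  using zcoc_right_zero subgrp_zero by blast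

lemma zcocI:
  assumes "\<And>x y. x \<in> C \<Longrightarrow> y \<in> C \<Longrightarrow> c (x, y) \<in> A"
    and "\<And>z. z \<notin> C \<times> C \<Longrightarrow> c z = undefined"
    and "\<And>x. x \<in> C \<Longrightarrow> c (x, 0) = 0"
    and "\<And>x y. x \<in> C \<Longrightarrow> y \<in> C \<Longrightarrow> c (x, y) = c (y, x)"
    and "\<And>x y z. x \<in> C \<Longrightarrow> y \<in> C \<Longrightarrow> z \<in> C \<Longrightarrow> c (y, z) - c (x + y, z) + c (x, y + z) - c (x, y) = 0"
  shows "c \<in> zcoc C A"
  unfolding zcoc_def using assms by (auto simp: PiE_def extensional_def Pi_def)

lemma zcoc_cadd:
  assumes "subgrp C" "subgrp A" "c \<in> zcoc C A" "d \<in> zcoc C A"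
  shows "cadd C c d \<in> zcoc C A"
proof (rule zcocI)
  fix x y z assume xyz: "x \<in> C" "y \<in> C" "z \<in> C"
  then have "cadd C c d (y, z) - cadd C c d (x + y, z) + cadd C c d (x, y + z) - cadd C c d (x, y)
    = (c (y, z) - c (x + y, z) + c (x, y + z) - c (x, y)) + (d (y, z) - d (x + y, z) + d (x, y + z) - d (x, y))"
    using assms(1) by (simp add: cadd_def subgrp_add algebra_simps)
  then show "cadd C c d (y, z) - cadd C c d (x + y, z) + cadd C c d (x, y + z) - cadd C c d (x, y) = 0"
    using zcoc_cocycle[OF assms(3) xyz] zcoc_cocycle[OF assms(4) xyz] by simp
qed (use assms in \<open>auto simp: cadd_def zcoc_right_zero zcoc_in zcoc_commute subgrp_add subgrp_zero\<close>)

lemma zcoc_csub: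
  assumes "subgrp C" "subgrp A" "c \<in> zcoc C A" "d \<in> zcoc C A"
  shows "csub C c d \<in> zcoc C A"
proof (rule zcocI)
  fix x y z assume xyz: "x \<in> C" "y \<in> C" "z \<in> C"
  then have "csub C c d (y, z) - csub C c d (x + y, z) + csub C c d (x, y + z) - csub C c d (x, y)
    = (c (y, z) - c (x + y, z) + c (x, y + z) - c (x, y)) - (d (y, z) - d (x + y, z) + d (x, y + z) - d (x, y))"
    using assms(1) by (simp add: csub_def subgrp_add algebra_simps)
  then show "csub C c d (y, z) - csub C c d (x + y, z) + csub C c d (x, y + z) - csub C c d (x, y) = 0"
    using zcoc_cocycle[OF assms(3) xyz] zcoc_cocycle[OF assms(4) xyz] by simp
qed (use assms in \<open>auto simp: csub_def zcoc_right_zero zcoc_in zcoc_commute subgrp_diff subgrp_zero\<close>)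

lemma is_cobd_onI:
  "(\<And>x. x \<in> S \<Longrightarrow> \<phi> x \<in> A) \<Longrightarrow> (\<And>x y. x \<in> S \<Longrightarrow> y \<in> S \<Longrightarrow> c (x, y) = \<phi> y - \<phi> (x + y) + \<phi> x)
    \<Longrightarrow> is_cobd_on S A c"
  unfolding is_cobd_on_def by blast

lemma bwcoc_zcoc: "c \<in> bwcoc C A \<Longrightarrow> c \<in> zcoc C A"
  unfolding bwcoc_def by blast

lemma bwcoc_is_cobd_on: "c \<in> bwcoc C A \<Longrightarrow> finite S \<Longrightarrow> subgrp S \<Longrightarrow> S \<subseteq> C \<Longrightarrow> is_cobd_on S A c"
  unfolding bwcoc_def by blast

lemma bwcoc_cadd:
  assumes "subgrp C" "subgrp A" "c \<in> bwcoc C A" "d \<in> bwcoc C A"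
  shows "cadd C c d \<in> bwcoc C A"
  unfolding bwcoc_def
proof (intro CollectI conjI allI impI)
  show "cadd C c d \<in> zcoc C A"
    using assms by (intro zcoc_cadd bwcoc_zcoc)
  fix S assume S: "finite S \<and> subgrp S \<and> S \<subseteq> C"
  then have "is_cobd_on S A c" "is_cobd_on S A d"
    using assms(3,4) bwcoc_is_cobd_on by blast+
  obtain \<phi> where \<phi>: "\<And>x. x \<in> S \<Longrightarrow> \<phi> x \<in> A"
    "\<And>x y. x \<in> S \<Longrightarrow> y \<in> S \<Longrightarrow> c (x, y) = \<phi> y - \<phi> (x + y) + \<phi> x"
    using \<open>is_cobd_on S A c\<close> unfolding is_cobd_on_def by blast
  obtain \<psi> where \<psi>: "\<And>x. x \<in> S \<Longrightarrow> \<psi> x \<in> A"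
    "\<And>x y. x \<in> S \<Longrightarrow> y \<in> S \<Longrightarrow> d (x, y) = \<psi> y - \<psi> (x + y) + \<psi> x"
    using \<open>is_cobd_on S A d\<close> unfolding is_cobd_on_def by blast
  show "is_cobd_on S A (cadd C c d)"
  proof (rule is_cobd_onI)
    show "\<phi> x + \<psi> x \<in> A" if "x \<in> S" for x
      using that \<phi>(1) \<psi>(1) subgrp_add[OF assms(2)] by blast
    fix x y assume "x \<in> S" "y \<in> S"
    moreover have "x \<in> C" "y \<in> C"
      using S \<open>x \<in> S\<close> \<open>y \<in> S\<close> by blast+
    ultimately show "cadd C c d (x, y) = (\<phi> y + \<psi> y) - (\<phi> (x + y) + \<psi> (x + y)) + (\<phi> x + \<psi> x)"
      using \<phi>(2)[of x y] \<psi>(2)[of x y] by (simp add: cadd_def)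
  qed
qed

lemma zcoc_add_add:
  assumes "subgrp C" "e \<in> zcoc C A" "a \<in> C" "b \<in> C" "u \<in> C" "v \<in> C"
  shows "e (a + u, b + v) = e (a, b) + e (u, v) + e (a + b, u + v) - e (a, u) - e (b, v)"
proof -
  note cocycle = zcoc_cocycle[OF assms(2)]
  have sums: "a + u \<in> C" "a + b \<in> C"
    using assms subgrp_add by blast+
  have I1: "e (b, v) - e (a + b + u, v) + e (a + u, b + v) - e (a + u, b) = 0"
    using cocycle[OF sums(1) assms(4,6)] by (simp add: add_ac)
  have I2: "e (u, v) - e (a + b + u, v) + e (a + b, u + v) - e (a + b, u) = 0"
    using cocycle[OF sums(2) assms(5,6)] by simp
  have I3: "e (b, u) - e (a + u, b) + e (a, b + u) - e (a, u) = 0"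
    using cocycle[OF assms(3,5,4)] zcoc_commute[OF assms(2) assms(5,4)] by (simp add: add_ac)
  have I4: "e (b, u) - e (a + b, u) + e (a, b + u) - e (a, b) = 0"
    using cocycle[OF assms(3,4,5)] by simp
  have "e (a + u, b + v) - (e (a, b) + e (u, v) + e (a + b, u + v) - e (a, u) - e (b, v))
     = (e (b, v) - e (a + b + u, v) + e (a + u, b + v) - e (a + u, b))
     - (e (u, v) - e (a + b + u, v) + e (a + b, u + v) - e (a + b, u))
     - (e (b, u) - e (a + u, b) + e (a, b + u) - e (a, u))
     + (e (b, u) - e (a + b, u) + e (a, b + u) - e (a, b))"
    by (simp add: algebra_simps)
  also have "\<dots> = 0"
    by (simp only: I1 I2 I3 I4) simp
  finally show ?thesis
    by simp
qed

lemma sum_cobd_multiples: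
  assumes "\<And>i. i < n \<Longrightarrow> c (nsmul i z, z) = \<phi> z - \<phi> (nsmul i z + z) + \<phi> (nsmul i z)"
  shows "(\<Sum>i<n. c (nsmul i z, z)) = nsmul n (\<phi> z) - \<phi> (nsmul n z) + \<phi> 0"
  using assms
proof (induction n)
  case (Suc n)
  have IH: "(\<Sum>i<n. c (nsmul i z, z)) = nsmul n (\<phi> z) - \<phi> (nsmul n z) + \<phi> 0"
    using Suc by simp
  have "nsmul n z + z = nsmul (Suc n) z"
    by (simp add: nsmul_Suc add.commute)
  then have step: "c (nsmul n z, z) = \<phi> z - \<phi> (nsmul (Suc n) z) + \<phi> (nsmul n z)"
    using Suc.prems[of n] by simp
  have "(\<Sum>i<Suc n. c (nsmul i z, z)) = (\<Sum>i<n. c (nsmul i z, z)) + c (nsmul n z, z)"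
    by simp
  also have "\<dots> = nsmul (Suc n) (\<phi> z) - \<phi> (nsmul (Suc n) z) + \<phi> 0"
    by (simp only: IH step) (simp add: nsmul_Suc algebra_simps)
  finally show ?case .
qed simp

section \<open>Coboundaries on all primary components glue\<close>

text \<open>Writing \<open>x = a + u\<close> with \<open>u\<close> the \<open>p\<close>-component and \<open>a\<close> the part at smaller primes,
  zcoc_add_add shows that \<open>e(a + u, b + v) - e(a, b) - e(u, v)\<close> is the coboundary of
  \<open>a + u \<mapsto> - e(a, u)\<close>. Adding this correction to the local potential \<open>X\<^sub>p(u)\<close>, prime by
  prime, gives a global potential.\<close>

primrec glued_potential ::
  "'c::ab_group_add set \<Rightarrow> ('c \<times> 'c \<Rightarrow> 'a::ab_group_add) \<Rightarrow> (nat \<Rightarrow> 'c \<Rightarrow> 'a) \<Rightarrow> nat \<Rightarrow> 'c \<Rightarrow> 'a"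
where
  "glued_potential C e X 0 x = 0"
| "glued_potential C e X (Suc N) x = glued_potential C e X N x +
     (if prime (Suc N)
      then X (Suc N) (primary_comp C (Suc N) x) - e (primary_part C N x, primary_comp C (Suc N) x)
      else 0)"

context torsion_subgrp
begin

context
  fixes A :: "'a::ab_group_add set" and e :: "'c \<times> 'c \<Rightarrow> 'a" and X :: "nat \<Rightarrow> 'c \<Rightarrow> 'a"
  assumes A_subgrp: "subgrp A" and e_zcoc: "e \<in> zcoc C A"
    and X_in: "\<And>p z. prime p \<Longrightarrow> z \<in> primary C p \<Longrightarrow> X p z \<in> A"
    and X_cobd: "\<And>p x y. prime p \<Longrightarrow> x \<in> primary C p \<Longrightarrow> y \<in> primary C p \<Longrightarrow>
      e (x, y) = X p y - X p (x + y) + X p x"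
begin

lemma primary_part_Suc_cobd:
  fixes N :: nat
  assumes "x \<in> C" "y \<in> C" "prime p"
  defines "d z \<equiv> X p (primary_comp C p z) - e (primary_part C N z, primary_comp C p z)"
  shows "e (primary_part C N x + primary_comp C p x, primary_part C N y + primary_comp C p y)
    = e (primary_part C N x, primary_part C N y) + d y - d (x + y) + d x"
proof -
  define a b u v where "a = primary_part C N x" and "b = primary_part C N y"
    and "u = primary_comp C p x" and "v = primary_comp C p y"
  have "u \<in> primary C p" "v \<in> primary C p"
    unfolding u_def v_def using primary_comp(1) assms(1-3) by auto
  then have Xuv: "e (u, v) = X p v - X p (u + v) + X p u"
    using X_cobd assms(3) by blast
  have "a \<in> C" "b \<in> C" "u \<in> C" "v \<in> C"
    unfolding a_def b_def u_def v_def using primary_part_in primary_comp_in assms(1-3) by auto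
  then have "e (a + u, b + v) = e (a, b) + e (u, v) + e (a + b, u + v) - e (a, u) - e (b, v)"
    by (rule zcoc_add_add[OF C_subgrp e_zcoc])
  also have "\<dots> = e (a, b) + (X p v - e (b, v)) - (X p (u + v) - e (a + b, u + v)) + (X p u - e (a, u))"
    by (simp only: Xuv) (simp add: algebra_simps)
  also have "\<dots> = e (a, b) + d y - d (x + y) + d x"
    unfolding d_def a_def b_def u_def v_def using primary_part_add primary_comp_add assms(1-3) by auto
  finally show ?thesis
    unfolding a_def b_def u_def v_def .
qed

lemma glued_potential_cobd:
  assumes "x \<in> C" "y \<in> C"
  shows "e (primary_part C N x, primary_part C N y)
    = glued_potential C e X N y - glued_potential C e X N (x + y) + glued_potential C e X N x"
proof (induction N)
  case 0
  then show ?case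
    using zcoc_zero_zero[OF C_subgrp e_zcoc] by simp
next
  case (Suc N)
  show ?case
  proof (cases "prime (Suc N)")
    case False
    with Suc show ?thesis
      by (simp add: primary_part_Suc)
  next
    case True
    then show ?thesis
      using primary_part_Suc_cobd[OF assms True, of N] Suc.IH by (simp add: primary_part_Suc algebra_simps)
  qed
qed

lemma glued_potential_stable:
  assumes "x \<in> C" "annih x \<le> N"
  shows "glued_potential C e X N x = glued_potential C e X (annih x) x"
  using assms(2)
proof (induction N rule: dec_induct)
  case (step N)
  have X0: "X p 0 = 0" if "prime p" for p
    using X_cobd[OF that, of 0 0] zcoc_zero_zero[OF C_subgrp e_zcoc]
      subgrp_zero[OF primary_subgrp[OF C_subgrp]] by simp
  have "prime (Suc N) \<Longrightarrow> primary_comp C (Suc N) x = 0"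
    using primary_comp_eq_0_if_annih_less[OF assms(1)] step by simp
  then show ?case
    using step X0 zcoc_right_zero[OF e_zcoc primary_part_in[OF assms(1)]] by simp
qed simp

lemma glued_potential_in: "x \<in> C \<Longrightarrow> glued_potential C e X N x \<in> A"
proof (induction N)
  case (Suc N)
  then show ?case
    using X_in primary_comp zcoc_in[OF e_zcoc primary_part_in primary_comp_in] A_subgrp
    by (simp add: subgrp_add subgrp_diff subgrp_zero)
qed (simp add: subgrp_zero[OF A_subgrp])

lemma is_cobd_on_glued: "is_cobd_on C A e"
proof (rule is_cobd_onI)
  show "glued_potential C e X (annih x) x \<in> A" if "x \<in> C" for x
    using glued_potential_in[OF that] .
next
  fix x y assume xy: "x \<in> C" "y \<in> C"
  then have "x + y \<in> C"
    using C_subgrp subgrp_add by blast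
  define N where "N = annih x + annih y + annih (x + y)"
  have "e (x, y) = e (primary_part C N x, primary_part C N y)"
    using primary_part_eq_self[of x N] primary_part_eq_self[of y N] xy N_def by simp
  also have "\<dots> = glued_potential C e X N y - glued_potential C e X N (x + y) + glued_potential C e X N x"
    using glued_potential_cobd xy by blast
  also have "\<dots> = glued_potential C e X (annih y) y - glued_potential C e X (annih (x + y)) (x + y)
      + glued_potential C e X (annih x) x"
    using glued_potential_stable[of x N] glued_potential_stable[of y N] glued_potential_stable[of "x + y" N]
      xy \<open>x + y \<in> C\<close> N_def by simp
  finally show "e (x, y) = glued_potential C e X (annih y) y - glued_potential C e X (annih (x + y)) (x + y)
      + glued_potential C e X (annih x) x" .
qed

end

lemma is_cobd_on_if_primary:
  assumes "subgrp A" "e \<in> zcoc C A" "\<And>p. prime p \<Longrightarrow> is_cobd_on (primary C p) A e"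
  shows "is_cobd_on C A e"
proof -
  have "\<forall>p. \<exists>\<phi>. prime p \<longrightarrow> (\<forall>z\<in>primary C p. \<phi> z \<in> A) \<and>
      (\<forall>x\<in>primary C p. \<forall>y\<in>primary C p. e (x, y) = \<phi> y - \<phi> (x + y) + \<phi> x)"
    using assms(3) unfolding is_cobd_on_def by blast
  then have "\<exists>X. \<forall>p. prime p \<longrightarrow> (\<forall>z\<in>primary C p. X p z \<in> A) \<and>
      (\<forall>x\<in>primary C p. \<forall>y\<in>primary C p. e (x, y) = X p y - X p (x + y) + X p x)"
    by (rule choice)
  then obtain X where X: "\<forall>p. prime p \<longrightarrow> (\<forall>z\<in>primary C p. X p z \<in> A) \<and>
      (\<forall>x\<in>primary C p. \<forall>y\<in>primary C p. e (x, y) = X p y - X p (x + y) + X p x)"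
    by blast
  show ?thesis
    by (rule is_cobd_on_glued[OF assms(1,2), of X]) (use X in blast)+
qed

end

section \<open>The correction at a single prime\<close>

text \<open>Restricting a cocycle \<open>c\<close> on \<open>C\<close> to \<open>C\<^sub>p\<close> gives values in \<open>A\<close>, not in \<open>A\<^sub>p\<close>.
  If \<open>c = \<delta>\<phi>\<close> on a subgroup containing \<open>z\<close> of order \<open>p\<^sup>k\<close>, telescoping gives
  \<open>\<Sum>i<p\<^sup>k. c(iz, z) = p\<^sup>k \<phi>(z)\<close>; so any \<open>p\<^sup>k\<close>-th root of this cyclic sum differs from \<open>\<phi>(z)\<close>
  by an element of \<open>A\<^sub>p\<close>, and subtracting the coboundary of such roots moves \<open>c\<close> into \<open>A\<^sub>p\<close>.
  The root is chosen from the cyclic sum alone, which makes the correction Borel.\<close>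

definition ord_exponent :: "nat \<Rightarrow> 'c::ab_group_add \<Rightarrow> nat" where
  "ord_exponent p z = (LEAST k. nsmul (p ^ k) z = 0)"

definition cyclic_sum :: "('c::ab_group_add \<times> 'c \<Rightarrow> 'a::ab_group_add) \<Rightarrow> nat \<Rightarrow> 'c \<Rightarrow> 'a" where
  "cyclic_sum c p z = (\<Sum>i<p ^ ord_exponent p z. c (nsmul i z, z))"

definition cyclic_root :: "'a::ab_group_add set \<Rightarrow> ('c::ab_group_add \<times> 'c \<Rightarrow> 'a) \<Rightarrow> nat \<Rightarrow> 'c \<Rightarrow> 'a" where
  "cyclic_root A c p z = (SOME a. a \<in> A \<and> nsmul (p ^ ord_exponent p z) a = cyclic_sum c p z)"

definition primary_cocycle ::
  "'c::ab_group_add set \<Rightarrow> 'a::ab_group_add set \<Rightarrow> ('c \<times> 'c \<Rightarrow> 'a) \<Rightarrow> nat \<Rightarrow> ('c \<times> 'c \<Rightarrow> 'a)"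
where
  "primary_cocycle C A c p = (\<lambda>(x, y)\<in>primary C p \<times> primary C p.
     c (x, y) - (cyclic_root A c p y - cyclic_root A c p (x + y) + cyclic_root A c p x))"

definition primary_decomp ::
  "'c::ab_group_add set \<Rightarrow> 'a::ab_group_add set \<Rightarrow> ('c \<times> 'c \<Rightarrow> 'a) \<Rightarrow> (nat \<Rightarrow> 'c \<times> 'c \<Rightarrow> 'a)"
where
  "primary_decomp C A c = (\<lambda>p\<in>primes_set. primary_cocycle C A c p)"

lemma nsmul_ord_exponent: "z \<in> primary C p \<Longrightarrow> nsmul (p ^ ord_exponent p z) z = 0"
  unfolding ord_exponent_def primary_def by (auto intro: LeastI)

lemma ord_exponent_zero [simp]: "ord_exponent p 0 = 0"
  unfolding ord_exponent_def by simp

lemma cyclic_sum_eq_nsmul: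
  assumes "subgrp S" "z \<in> S" "\<And>x y. x \<in> S \<Longrightarrow> y \<in> S \<Longrightarrow> c (x, y) = \<phi> y - \<phi> (x + y) + \<phi> x"
    and "c (0, 0) = 0" "nsmul (p ^ ord_exponent p z) z = 0"
  shows "cyclic_sum c p z = nsmul (p ^ ord_exponent p z) (\<phi> z)"
proof -
  have "\<phi> 0 = 0"
    using assms(3,4) subgrp_zero[OF assms(1)] by force
  moreover have "(\<Sum>i<p ^ ord_exponent p z. c (nsmul i z, z))
      = nsmul (p ^ ord_exponent p z) (\<phi> z) - \<phi> (nsmul (p ^ ord_exponent p z) z) + \<phi> 0"
    by (rule sum_cobd_multiples) (use assms(3)[OF subgrp_nsmul[OF assms(1,2)] assms(2)] in blast)
  ultimately show ?thesis
    unfolding cyclic_sum_def using assms(5) by simp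
qed

lemma cyclic_sum_cadd:
  "subgrp C \<Longrightarrow> z \<in> C \<Longrightarrow> cyclic_sum (cadd C c d) p z = cyclic_sum c p z + cyclic_sum d p z"
  unfolding cyclic_sum_def cadd_def by (simp add: subgrp_nsmul sum.distrib)

lemma cyclic_sum_csub:
  "subgrp C \<Longrightarrow> z \<in> C \<Longrightarrow> cyclic_sum (csub C c d) p z = cyclic_sum c p z - cyclic_sum d p z"
  unfolding cyclic_sum_def csub_def by (simp add: subgrp_nsmul sum_subtractf)

lemma primary_cocycle_apply:
  "x \<in> primary C p \<Longrightarrow> y \<in> primary C p \<Longrightarrow> primary_cocycle C A c p (x, y)
    = c (x, y) - (cyclic_root A c p y - cyclic_root A c p (x + y) + cyclic_root A c p x)"
  unfolding primary_cocycle_def by simp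

lemma is_cobd_on_primaryI:
  assumes "\<And>z. z \<in> S \<Longrightarrow> \<psi> z \<in> A" "\<And>z. z \<in> S \<Longrightarrow> nsmul (p ^ ord_exponent p z) (\<psi> z) = 0"
    and "\<And>x y. x \<in> S \<Longrightarrow> y \<in> S \<Longrightarrow> e (x, y) = \<psi> y - \<psi> (x + y) + \<psi> x"
  shows "is_cobd_on S (primary A p) e"
  using assms by (intro is_cobd_onI) (auto intro: primaryI)

locale pext_decomp = torsion_subgrp C for C :: "'c::ab_group_add set" +
  fixes A :: "'a::ab_group_add set"
  assumes A_subgrp: "subgrp A"
begin

lemma primary_C_subgrp: "subgrp (primary C p)"
  using primary_subgrp[OF C_subgrp] .

lemma primary_A_subgrp: "subgrp (primary A p)"
  using primary_subgrp[OF A_subgrp] .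

lemma in_C_if_primary: "x \<in> primary C p \<Longrightarrow> x \<in> C"
  using primary_subset by blast

lemma in_A_if_primary: "a \<in> primary A p \<Longrightarrow> a \<in> A"
  using primary_subset by blast

lemma cyclic_root:
  assumes "c \<in> bwcoc C A" "prime p" "z \<in> primary C p"
  shows "cyclic_root A c p z \<in> A"
    and "nsmul (p ^ ord_exponent p z) (cyclic_root A c p z) = cyclic_sum c p z"
proof -
  have zC: "z \<in> C"
    using in_C_if_primary[OF assms(3)] .
  obtain n where n: "0 < n" "nsmul n z = 0"
    using primary_torsion[OF assms(3,2)] by blast
  obtain S where S: "finite S" "subgrp S" "S \<subseteq> C" "z \<in> S"
    using finite_subgrp_containing[OF C_subgrp zC zC n(2,1) n(2,1)] by blast
  have "is_cobd_on S A c"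
    using bwcoc_is_cobd_on[OF assms(1) S(1-3)] .
  then obtain \<phi> where \<phi>: "\<And>x. x \<in> S \<Longrightarrow> \<phi> x \<in> A"
    "\<And>x y. x \<in> S \<Longrightarrow> y \<in> S \<Longrightarrow> c (x, y) = \<phi> y - \<phi> (x + y) + \<phi> x"
    unfolding is_cobd_on_def by blast
  have "cyclic_sum c p z = nsmul (p ^ ord_exponent p z) (\<phi> z)"
    using cyclic_sum_eq_nsmul[OF S(2,4) \<phi>(2)] zcoc_zero_zero[OF C_subgrp bwcoc_zcoc[OF assms(1)]]
      nsmul_ord_exponent[OF assms(3)] by blast
  then have "\<exists>a. a \<in> A \<and> nsmul (p ^ ord_exponent p z) a = cyclic_sum c p z"
    using \<phi>(1)[OF S(4)] by (intro exI[of _ "\<phi> z"]) simp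
  then have "cyclic_root A c p z \<in> A \<and> nsmul (p ^ ord_exponent p z) (cyclic_root A c p z) = cyclic_sum c p z"
    unfolding cyclic_root_def by (rule someI_ex)
  then show "cyclic_root A c p z \<in> A"
    and "nsmul (p ^ ord_exponent p z) (cyclic_root A c p z) = cyclic_sum c p z"
    by blast+
qed

lemma cyclic_root_zero:
  assumes "c \<in> zcoc C A"
  shows "cyclic_root A c p 0 = 0"
proof -
  have "cyclic_sum c p 0 = 0"
    unfolding cyclic_sum_def using zcoc_zero_zero[OF C_subgrp assms] by simp
  then show ?thesis
    unfolding cyclic_root_def using subgrp_zero[OF A_subgrp] by (auto intro: some_equality)
qed

lemma primary_cocycle_is_cobd_on:
  assumes "c \<in> bwcoc C A" "prime p" "finite S" "subgrp S" "S \<subseteq> primary C p"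
  shows "is_cobd_on S (primary A p) (primary_cocycle C A c p)"
proof -
  have "S \<subseteq> C"
    using assms(5) primary_subset by blast
  then obtain \<phi> where \<phi>: "\<And>x. x \<in> S \<Longrightarrow> \<phi> x \<in> A"
    "\<And>x y. x \<in> S \<Longrightarrow> y \<in> S \<Longrightarrow> c (x, y) = \<phi> y - \<phi> (x + y) + \<phi> x"
    using bwcoc_is_cobd_on[OF assms(1,3,4)] unfolding is_cobd_on_def by blast
  show ?thesis
  proof (rule is_cobd_on_primaryI[where \<psi> = "\<lambda>z. \<phi> z - cyclic_root A c p z"])
    fix z assume z: "z \<in> S"
    then have zp: "z \<in> primary C p"
      using assms(5) by blast
    show "\<phi> z - cyclic_root A c p z \<in> A"
      using \<phi>(1)[OF z] cyclic_root(1)[OF assms(1,2) zp] A_subgrp by (rule subgrp_diff[rotated])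
    have "cyclic_sum c p z = nsmul (p ^ ord_exponent p z) (\<phi> z)"
      using cyclic_sum_eq_nsmul[OF assms(4) z \<phi>(2)] zcoc_zero_zero[OF C_subgrp bwcoc_zcoc[OF assms(1)]]
        nsmul_ord_exponent[OF zp] by blast
    then show "nsmul (p ^ ord_exponent p z) (\<phi> z - cyclic_root A c p z) = 0"
      using cyclic_root(2)[OF assms(1,2) zp] by (simp add: nsmul_diff_right)
  next
    fix x y assume "x \<in> S" "y \<in> S"
    moreover have "x + y \<in> S"
      using calculation assms(4) subgrp_add by blast
    ultimately show "primary_cocycle C A c p (x, y)
        = (\<phi> y - cyclic_root A c p y) - (\<phi> (x + y) - cyclic_root A c p (x + y)) + (\<phi> x - cyclic_root A c p x)"
      using assms(5) \<phi>(2) by (subst primary_cocycle_apply) (auto simp: algebra_simps)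
  qed
qed

lemma primary_cocycle_in:
  assumes "c \<in> bwcoc C A" "prime p" "x \<in> primary C p" "y \<in> primary C p"
  shows "primary_cocycle C A c p (x, y) \<in> primary A p"
proof -
  obtain n where n: "0 < n" "nsmul n x = 0"
    using primary_torsion[OF assms(3,2)] by blast
  obtain m where m: "0 < m" "nsmul m y = 0"
    using primary_torsion[OF assms(4,2)] by blast
  obtain S where S: "finite S" "subgrp S" "S \<subseteq> primary C p" "x \<in> S" "y \<in> S"
    using finite_subgrp_containing[OF primary_C_subgrp assms(3,4) n(2,1) m(2,1)] by blast
  then obtain \<psi> where "\<And>z. z \<in> S \<Longrightarrow> \<psi> z \<in> primary A p"
    "primary_cocycle C A c p (x, y) = \<psi> y - \<psi> (x + y) + \<psi> x"
    using primary_cocycle_is_cobd_on[OF assms(1,2) S(1-3)] unfolding is_cobd_on_def by blast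
  moreover have "x + y \<in> S"
    using S subgrp_add by blast
  ultimately show ?thesis
    using S primary_A_subgrp by (simp add: subgrp_add subgrp_diff)
qed

lemma primary_cocycle_zcoc:
  assumes "c \<in> bwcoc C A" "prime p"
  shows "primary_cocycle C A c p \<in> zcoc (primary C p) (primary A p)"
proof (rule zcocI)
  have c: "c \<in> zcoc C A"
    using bwcoc_zcoc[OF assms(1)] .
  show "primary_cocycle C A c p (x, y) \<in> primary A p" if "x \<in> primary C p" "y \<in> primary C p" for x y
    using primary_cocycle_in[OF assms that] .
  show "primary_cocycle C A c p z = undefined" if "z \<notin> primary C p \<times> primary C p" for z
    using that unfolding primary_cocycle_def by auto
  show "primary_cocycle C A c p (x, 0) = 0" if "x \<in> primary C p" for x
    using that subgrp_zero[OF primary_C_subgrp] zcoc_right_zero[OF c] in_C_if_primary cyclic_root_zero[OF c]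
    by (simp add: primary_cocycle_apply)
  show "primary_cocycle C A c p (x, y) = primary_cocycle C A c p (y, x)"
    if "x \<in> primary C p" "y \<in> primary C p" for x y
    using that zcoc_commute[OF c] in_C_if_primary by (simp add: primary_cocycle_apply add.commute)
  fix x y z assume xyz: "x \<in> primary C p" "y \<in> primary C p" "z \<in> primary C p"
  then have "x + y \<in> primary C p" "y + z \<in> primary C p"
    using primary_C_subgrp subgrp_add by blast+
  with xyz have "primary_cocycle C A c p (y, z) - primary_cocycle C A c p (x + y, z)
      + primary_cocycle C A c p (x, y + z) - primary_cocycle C A c p (x, y)
    = c (y, z) - c (x + y, z) + c (x, y + z) - c (x, y)"
    by (simp add: primary_cocycle_apply algebra_simps)
  also have "\<dots> = 0"
    using zcoc_cocycle[OF c] xyz in_C_if_primary by blast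
  finally show "primary_cocycle C A c p (y, z) - primary_cocycle C A c p (x + y, z)
      + primary_cocycle C A c p (x, y + z) - primary_cocycle C A c p (x, y) = 0" .
qed

lemma primary_cocycle_bwcoc:
  assumes "c \<in> bwcoc C A" "prime p"
  shows "primary_cocycle C A c p \<in> bwcoc (primary C p) (primary A p)"
  unfolding bwcoc_def using primary_cocycle_zcoc[OF assms] primary_cocycle_is_cobd_on[OF assms] by blast

lemma primary_decomp_in_prod_bw: "c \<in> bwcoc C A \<Longrightarrow> primary_decomp C A c \<in> prod_bw C A"
  unfolding prod_bw_def primary_decomp_def primes_set_def by (simp add: primary_cocycle_bwcoc)

end

section \<open>Homomorphism and injectivity modulo coboundaries\<close>

context pext_decomp
begin

lemma bcoc_primaryI:
  assumes "e \<in> zcoc (primary C p) (primary A p)"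
    and "\<And>z. z \<in> primary C p \<Longrightarrow> \<psi> z \<in> A"
    and "\<And>z. z \<in> primary C p \<Longrightarrow> nsmul (p ^ ord_exponent p z) (\<psi> z) = 0"
    and "\<And>x y. x \<in> primary C p \<Longrightarrow> y \<in> primary C p \<Longrightarrow> e (x, y) = \<psi> y - \<psi> (x + y) + \<psi> x"
  shows "e \<in> bcoc (primary C p) (primary A p)"
  unfolding bcoc_def using assms(1) is_cobd_on_primaryI[of "primary C p" \<psi> A p e] assms(2-4) by blast

lemma primary_cocycle_cadd:
  assumes c: "c \<in> bwcoc C A" and d: "d \<in> bwcoc C A" and p: "prime p"
  shows "csub (primary C p) (primary_cocycle C A (cadd C c d) p)
      (cadd (primary C p) (primary_cocycle C A c p) (primary_cocycle C A d p))
    \<in> bcoc (primary C p) (primary A p)"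
proof -
  have cd: "cadd C c d \<in> bwcoc C A"
    using bwcoc_cadd[OF C_subgrp A_subgrp c d] .
  let ?\<psi> = "\<lambda>z. cyclic_root A c p z + cyclic_root A d p z - cyclic_root A (cadd C c d) p z"
  show ?thesis
  proof (rule bcoc_primaryI[where \<psi> = ?\<psi>])
    show "csub (primary C p) (primary_cocycle C A (cadd C c d) p)
        (cadd (primary C p) (primary_cocycle C A c p) (primary_cocycle C A d p))
      \<in> zcoc (primary C p) (primary A p)"
      using primary_cocycle_zcoc assms cd primary_C_subgrp primary_A_subgrp by (intro zcoc_csub zcoc_cadd)
  next
    fix z assume z: "z \<in> primary C p"
    show "?\<psi> z \<in> A"
      using cyclic_root(1)[OF c p z] cyclic_root(1)[OF d p z] cyclic_root(1)[OF cd p z] A_subgrp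
      by (intro subgrp_diff subgrp_add)
    have "nsmul (p ^ ord_exponent p z) (?\<psi> z)
        = cyclic_sum c p z + cyclic_sum d p z - cyclic_sum (cadd C c d) p z"
      using cyclic_root(2)[OF c p z] cyclic_root(2)[OF d p z] cyclic_root(2)[OF cd p z]
      by (simp add: nsmul_add_right nsmul_diff_right)
    then show "nsmul (p ^ ord_exponent p z) (?\<psi> z) = 0"
      using cyclic_sum_cadd[OF C_subgrp in_C_if_primary[OF z], of c d p] by simp
  next
    fix x y assume "x \<in> primary C p" "y \<in> primary C p"
    moreover have "x + y \<in> primary C p"
      using calculation primary_C_subgrp subgrp_add by blast
    ultimately show "csub (primary C p) (primary_cocycle C A (cadd C c d) p)
        (cadd (primary C p) (primary_cocycle C A c p) (primary_cocycle C A d p)) (x, y)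
      = ?\<psi> y - ?\<psi> (x + y) + ?\<psi> x"
      using in_C_if_primary by (simp add: csub_def cadd_def primary_cocycle_apply algebra_simps)
  qed
qed

lemma primary_decomp_cadd:
  assumes "c \<in> bwcoc C A" "d \<in> bwcoc C A"
  shows "psub C (primary_decomp C A (cadd C c d)) (padd C (primary_decomp C A c) (primary_decomp C A d))
    \<in> prod_b C A"
  unfolding prod_b_def psub_def padd_def primary_decomp_def primes_set_def
  using primary_cocycle_cadd[OF assms] by simp

lemma primary_cocycle_csub_if_bcoc:
  assumes c: "c \<in> bwcoc C A" and d: "d \<in> bwcoc C A" and p: "prime p" and cd: "csub C c d \<in> bcoc C A"
  shows "csub (primary C p) (primary_cocycle C A c p) (primary_cocycle C A d p) \<in> bcoc (primary C p) (primary A p)"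
proof -
  obtain \<theta> where \<theta>: "\<And>x. x \<in> C \<Longrightarrow> \<theta> x \<in> A"
    "\<And>x y. x \<in> C \<Longrightarrow> y \<in> C \<Longrightarrow> csub C c d (x, y) = \<theta> y - \<theta> (x + y) + \<theta> x"
    using cd unfolding bcoc_def is_cobd_on_def by blast
  let ?\<psi> = "\<lambda>z. \<theta> z - cyclic_root A c p z + cyclic_root A d p z"
  show ?thesis
  proof (rule bcoc_primaryI[where \<psi> = ?\<psi>])
    show "csub (primary C p) (primary_cocycle C A c p) (primary_cocycle C A d p) \<in> zcoc (primary C p) (primary A p)"
      using primary_cocycle_zcoc c d p primary_C_subgrp primary_A_subgrp by (intro zcoc_csub)
  next
    fix z assume z: "z \<in> primary C p"
    then have zC: "z \<in> C"
      by (rule in_C_if_primary)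
    show "?\<psi> z \<in> A"
      using \<theta>(1)[OF zC] cyclic_root(1)[OF c p z] cyclic_root(1)[OF d p z] A_subgrp
      by (intro subgrp_diff subgrp_add)
    have "cyclic_sum (csub C c d) p z = nsmul (p ^ ord_exponent p z) (\<theta> z)"
      using cyclic_sum_eq_nsmul[OF C_subgrp zC \<theta>(2)] zcoc_zero_zero[OF C_subgrp] cd nsmul_ord_exponent[OF z]
      unfolding bcoc_def by blast
    then have "nsmul (p ^ ord_exponent p z) (\<theta> z) = cyclic_sum c p z - cyclic_sum d p z"
      using cyclic_sum_csub[OF C_subgrp zC, of c d p] by simp
    then show "nsmul (p ^ ord_exponent p z) (?\<psi> z) = 0"
      using cyclic_root(2)[OF c p z] cyclic_root(2)[OF d p z]
      by (simp add: nsmul_add_right nsmul_diff_right)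
  next
    fix x y assume "x \<in> primary C p" "y \<in> primary C p"
    moreover have "x + y \<in> primary C p"
      using calculation primary_C_subgrp subgrp_add by blast
    moreover have "c (x, y) - d (x, y) = \<theta> y - \<theta> (x + y) + \<theta> x"
      using \<theta>(2) calculation in_C_if_primary by (auto simp: csub_def)
    ultimately show "csub (primary C p) (primary_cocycle C A c p) (primary_cocycle C A d p) (x, y)
      = ?\<psi> y - ?\<psi> (x + y) + ?\<psi> x"
      by (simp add: csub_def primary_cocycle_apply algebra_simps)
  qed
qed

lemma is_cobd_on_primary_csub:
  assumes c: "c \<in> bwcoc C A" and d: "d \<in> bwcoc C A" and p: "prime p"
    and cd: "csub (primary C p) (primary_cocycle C A c p) (primary_cocycle C A d p) \<in> bcoc (primary C p) (primary A p)"
  shows "is_cobd_on (primary C p) A (csub C c d)"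
proof -
  obtain \<Psi> where \<Psi>: "\<And>z. z \<in> primary C p \<Longrightarrow> \<Psi> z \<in> primary A p"
    "\<And>x y. x \<in> primary C p \<Longrightarrow> y \<in> primary C p \<Longrightarrow>
      csub (primary C p) (primary_cocycle C A c p) (primary_cocycle C A d p) (x, y) = \<Psi> y - \<Psi> (x + y) + \<Psi> x"
    using cd unfolding bcoc_def is_cobd_on_def by blast
  show ?thesis
  proof (rule is_cobd_onI[where \<phi> = "\<lambda>z. \<Psi> z + cyclic_root A c p z - cyclic_root A d p z"])
    fix z assume z: "z \<in> primary C p"
    show "\<Psi> z + cyclic_root A c p z - cyclic_root A d p z \<in> A"
      using \<Psi>(1)[OF z] primary_subset cyclic_root(1)[OF c p z] cyclic_root(1)[OF d p z] A_subgrp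
      by (intro subgrp_diff subgrp_add) auto
  next
    fix x y assume "x \<in> primary C p" "y \<in> primary C p"
    moreover have "x + y \<in> primary C p"
      using calculation primary_C_subgrp subgrp_add by blast
    ultimately show "csub C c d (x, y) = (\<Psi> y + cyclic_root A c p y - cyclic_root A d p y)
        - (\<Psi> (x + y) + cyclic_root A c p (x + y) - cyclic_root A d p (x + y))
        + (\<Psi> x + cyclic_root A c p x - cyclic_root A d p x)"
      using \<Psi>(2)[of x y] in_C_if_primary by (simp add: csub_def primary_cocycle_apply algebra_simps)
  qed
qed

lemma primary_decomp_csub_iff:
  assumes c: "c \<in> bwcoc C A" and d: "d \<in> bwcoc C A"
  shows "csub C c d \<in> bcoc C A \<longleftrightarrow> psub C (primary_decomp C A c) (primary_decomp C A d) \<in> prod_b C A"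
proof
  show "psub C (primary_decomp C A c) (primary_decomp C A d) \<in> prod_b C A" if "csub C c d \<in> bcoc C A"
    unfolding prod_b_def psub_def primary_decomp_def primes_set_def
    by (simp add: primary_cocycle_csub_if_bcoc[OF c d _ that])
next
  assume prod: "psub C (primary_decomp C A c) (primary_decomp C A d) \<in> prod_b C A"
  have zcoc: "csub C c d \<in> zcoc C A"
    using zcoc_csub[OF C_subgrp A_subgrp bwcoc_zcoc[OF c] bwcoc_zcoc[OF d]] .
  have "is_cobd_on C A (csub C c d)"
  proof (rule is_cobd_on_if_primary[OF A_subgrp zcoc])
    fix p :: nat assume p: "prime p"
    then have "csub (primary C p) (primary_cocycle C A c p) (primary_cocycle C A d p) \<in> bcoc (primary C p) (primary A p)"
      using PiE_mem[OF prod[unfolded prod_b_def], of p]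
      by (simp add: psub_def primary_decomp_def primes_set_def)
    then show "is_cobd_on (primary C p) A (csub C c d)"
      by (rule is_cobd_on_primary_csub[OF c d p])
  qed
  with zcoc show "csub C c d \<in> bcoc C A"
    unfolding bcoc_def by blast
qed

end

section \<open>Surjectivity\<close>

text \<open>The bound \<open>annih x + annih y\<close> only makes the sum finite: all later terms vanish.\<close>

definition sum_cocycle :: "'c::ab_group_add set \<Rightarrow> (nat \<Rightarrow> 'c \<times> 'c \<Rightarrow> 'a::ab_group_add) \<Rightarrow> 'c \<times> 'c \<Rightarrow> 'a" where
  "sum_cocycle C F = (\<lambda>(x, y)\<in>C \<times> C.
     \<Sum>p | prime p \<and> p \<le> annih x + annih y. F p (primary_comp C p x, primary_comp C p y))"

context pext_decomp
begin

context
  fixes F :: "nat \<Rightarrow> 'c \<times> 'c \<Rightarrow> 'a"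
  assumes F_zcoc: "\<And>p. prime p \<Longrightarrow> F p \<in> zcoc (primary C p) (primary A p)"
begin

lemma F_comp_in: "prime p \<Longrightarrow> x \<in> C \<Longrightarrow> y \<in> C \<Longrightarrow> F p (primary_comp C p x, primary_comp C p y) \<in> primary A p"
  using zcoc_in[OF F_zcoc] primary_comp(1) by blast

lemma sum_cocycle_eq:
  assumes "x \<in> C" "y \<in> C" "annih x \<le> N" "annih y \<le> N"
  shows "sum_cocycle C F (x, y) = (\<Sum>p | prime p \<and> p \<le> N. F p (primary_comp C p x, primary_comp C p y))"
proof -
  let ?g = "\<lambda>p. F p (primary_comp C p x, primary_comp C p y)"
  have vanish: "?g p = 0" if "prime p" "max (annih x) (annih y) < p" for p
    using that primary_comp_eq_0_if_annih_less assms(1,2)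
      zcoc_zero_zero[OF primary_C_subgrp F_zcoc[OF that(1)]] by simp
  have "(\<Sum>p | prime p \<and> p \<le> annih x + annih y. ?g p) = (\<Sum>p | prime p \<and> p \<le> max (annih x) (annih y). ?g p)"
    by (rule sum_primes_le_eq) (use vanish in auto)
  moreover have "(\<Sum>p | prime p \<and> p \<le> N. ?g p) = (\<Sum>p | prime p \<and> p \<le> max (annih x) (annih y). ?g p)"
    by (rule sum_primes_le_eq) (use vanish assms(3,4) in auto)
  ultimately show ?thesis
    unfolding sum_cocycle_def using assms(1,2) by simp
qed

lemma sum_cocycle_zcoc: "sum_cocycle C F \<in> zcoc C A"
proof (rule zcocI)
  fix x y assume xy: "x \<in> C" "y \<in> C"
  show "sum_cocycle C F (x, y) \<in> A"
    unfolding sum_cocycle_def using xy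
    by (simp, intro subgrp_sum[OF A_subgrp]) (use F_comp_in in_A_if_primary in blast)
  show "sum_cocycle C F (x, y) = sum_cocycle C F (y, x)"
    unfolding sum_cocycle_def using xy zcoc_commute[OF F_zcoc] primary_comp(1)
    by (simp add: add.commute)
next
  show "sum_cocycle C F z = undefined" if "z \<notin> C \<times> C" for z
    using that unfolding sum_cocycle_def by auto
next
  fix x assume "x \<in> C"
  then show "sum_cocycle C F (x, 0) = 0"
    unfolding sum_cocycle_def using subgrp_zero[OF C_subgrp] zcoc_right_zero[OF F_zcoc] primary_comp(1)
    by simp
next
  fix x y z assume xyz: "x \<in> C" "y \<in> C" "z \<in> C"
  then have sums: "x + y \<in> C" "y + z \<in> C"
    using C_subgrp subgrp_add by blast+
  define N where "N = annih x + annih y + annih z + annih (x + y) + annih (y + z)"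
  let ?F = "\<lambda>p u v. F p (primary_comp C p u, primary_comp C p v)"
  have "sum_cocycle C F (y, z) - sum_cocycle C F (x + y, z) + sum_cocycle C F (x, y + z) - sum_cocycle C F (x, y)
    = (\<Sum>p | prime p \<and> p \<le> N. ?F p y z - ?F p (x + y) z + ?F p x (y + z) - ?F p x y)"
    using xyz sums N_def by (simp add: sum_cocycle_eq[of _ _ N] sum_subtractf sum.distrib)
  also have "\<dots> = 0"
  proof (rule sum.neutral, intro ballI)
    fix p assume "p \<in> {p. prime p \<and> p \<le> N}"
    then have p: "prime p"
      by simp
    show "?F p y z - ?F p (x + y) z + ?F p x (y + z) - ?F p x y = 0"
      using zcoc_cocycle[OF F_zcoc[OF p] primary_comp(1)[OF xyz(1) p] primary_comp(1)[OF xyz(2) p]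
          primary_comp(1)[OF xyz(3) p]]
        primary_comp_add[OF xyz(1,2) p] primary_comp_add[OF xyz(2,3) p] by simp
  qed
  finally show "sum_cocycle C F (y, z) - sum_cocycle C F (x + y, z) + sum_cocycle C F (x, y + z)
    - sum_cocycle C F (x, y) = 0" .
qed

lemma sum_cocycle_primary:
  assumes p: "prime p" and xy: "x \<in> primary C p" "y \<in> primary C p"
  shows "sum_cocycle C F (x, y) = F p (x, y)"
proof -
  have xyC: "x \<in> C" "y \<in> C"
    using xy in_C_if_primary by auto
  define N where "N = annih x + annih y + p"
  let ?g = "\<lambda>q. F q (primary_comp C q x, primary_comp C q y)"
  have "(\<Sum>q | prime q \<and> q \<le> N. ?g q) = ?g p + (\<Sum>q \<in> {q. prime q \<and> q \<le> N} - {p}. ?g q)"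
    using N_def p by (intro sum.remove) auto
  also have "(\<Sum>q \<in> {q. prime q \<and> q \<le> N} - {p}. ?g q) = 0"
  proof (rule sum.neutral, intro ballI)
    fix q assume "q \<in> {q. prime q \<and> q \<le> N} - {p}"
    then have q: "prime q" "q \<noteq> p"
      by auto
    then show "?g q = 0"
      using primary_comp_other[OF xy(1) q(1) p] primary_comp_other[OF xy(2) q(1) p]
        zcoc_zero_zero[OF primary_C_subgrp F_zcoc[OF q(1)]] by simp
  qed
  finally show ?thesis
    using sum_cocycle_eq[OF xyC, of N] N_def primary_comp_self xy by simp
qed

lemma sum_cocycle_is_cobd_on:
  assumes S: "subgrp S" "S \<subseteq> C"
    and \<Psi>_in: "\<And>p z. prime p \<Longrightarrow> z \<in> primary_comp C p ` S \<Longrightarrow> \<Psi> p z \<in> A"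
    and \<Psi>_cobd: "\<And>p a b. prime p \<Longrightarrow> a \<in> primary_comp C p ` S \<Longrightarrow> b \<in> primary_comp C p ` S \<Longrightarrow>
      F p (a, b) = \<Psi> p b - \<Psi> p (a + b) + \<Psi> p a"
  shows "is_cobd_on S A (sum_cocycle C F)"
proof -
  have \<Psi>0: "\<Psi> p 0 = 0" if p: "prime p" for p
  proof -
    have "0 \<in> primary_comp C p ` S"
      using subgrp_zero[OF S(1)] primary_comp_zero by (blast intro: sym)
    then show ?thesis
      using \<Psi>_cobd[OF p, of 0 0] zcoc_zero_zero[OF primary_C_subgrp F_zcoc[OF p]] by simp
  qed
  define \<phi> where "\<phi> x = (\<Sum>p | prime p \<and> p \<le> annih x. \<Psi> p (primary_comp C p x))" for x
  have \<phi>_eq: "\<phi> x = (\<Sum>p | prime p \<and> p \<le> N. \<Psi> p (primary_comp C p x))" if "x \<in> C" "annih x \<le> N" for x N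
  proof -
    have "(\<Sum>p | prime p \<and> p \<le> N. \<Psi> p (primary_comp C p x)) = \<phi> x"
      unfolding \<phi>_def by (rule sum_primes_le_eq) (use that primary_comp_eq_0_if_annih_less \<Psi>0 in auto)
    then show ?thesis
      by simp
  qed
  show ?thesis
  proof (rule is_cobd_onI)
    show "\<phi> x \<in> A" if "x \<in> S" for x
      unfolding \<phi>_def using \<Psi>_in that by (intro subgrp_sum[OF A_subgrp]) blast
  next
    fix x y assume xy: "x \<in> S" "y \<in> S"
    then have xyC: "x \<in> C" "y \<in> C" "x + y \<in> C"
      using S C_subgrp subgrp_add by blast+
    define N where "N = annih x + annih y + annih (x + y)"
    have "sum_cocycle C F (x, y) = (\<Sum>p | prime p \<and> p \<le> N. F p (primary_comp C p x, primary_comp C p y))"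
      using sum_cocycle_eq xyC N_def by simp
    also have "\<dots> = (\<Sum>p | prime p \<and> p \<le> N. \<Psi> p (primary_comp C p y)
        - \<Psi> p (primary_comp C p (x + y)) + \<Psi> p (primary_comp C p x))"
      using \<Psi>_cobd xy primary_comp_add[OF xyC(1,2)] by (intro sum.cong) auto
    also have "\<dots> = \<phi> y - \<phi> (x + y) + \<phi> x"
      using \<phi>_eq[of x N] \<phi>_eq[of y N] \<phi>_eq[of "x + y" N] xyC N_def
      by (simp add: sum_subtractf sum.distrib)
    finally show "sum_cocycle C F (x, y) = \<phi> y - \<phi> (x + y) + \<phi> x" .
  qed
qed

lemma sum_cocycle_bwcoc:
  assumes F_bwcoc: "\<And>p. prime p \<Longrightarrow> F p \<in> bwcoc (primary C p) (primary A p)"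
  shows "sum_cocycle C F \<in> bwcoc C A"
  unfolding bwcoc_def
proof (intro CollectI conjI allI impI sum_cocycle_zcoc)
  fix S assume S: "finite S \<and> subgrp S \<and> S \<subseteq> C"
  let ?S = "\<lambda>p. primary_comp C p ` S"
  have "is_cobd_on (?S p) (primary A p) (F p)" if p: "prime p" for p
  proof (rule bwcoc_is_cobd_on[OF F_bwcoc[OF p]])
    show "finite (?S p)" "?S p \<subseteq> primary C p"
      using S primary_comp(1) p by auto
    show "subgrp (?S p)"
      using S primary_comp_add p by (intro subgrp_image_additive) auto
  qed
  then have "\<forall>p. \<exists>\<Psi>. prime p \<longrightarrow> (\<forall>z\<in>?S p. \<Psi> z \<in> primary A p) \<and>
      (\<forall>a\<in>?S p. \<forall>b\<in>?S p. F p (a, b) = \<Psi> b - \<Psi> (a + b) + \<Psi> a)"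
    unfolding is_cobd_on_def by blast
  then have "\<exists>\<Psi>. \<forall>p. prime p \<longrightarrow> (\<forall>z\<in>?S p. \<Psi> p z \<in> primary A p) \<and>
      (\<forall>a\<in>?S p. \<forall>b\<in>?S p. F p (a, b) = \<Psi> p b - \<Psi> p (a + b) + \<Psi> p a)"
    by (rule choice)
  then obtain \<Psi> where \<Psi>: "\<forall>p. prime p \<longrightarrow> (\<forall>z\<in>?S p. \<Psi> p z \<in> primary A p) \<and>
      (\<forall>a\<in>?S p. \<forall>b\<in>?S p. F p (a, b) = \<Psi> p b - \<Psi> p (a + b) + \<Psi> p a)"
    by blast
  show "is_cobd_on S A (sum_cocycle C F)"
    by (rule sum_cocycle_is_cobd_on[where \<Psi> = \<Psi>]) (use S \<Psi> in_A_if_primary in blast)+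
qed

lemma primary_cocycle_sum_cocycle:
  assumes F_bwcoc: "\<And>p. prime p \<Longrightarrow> F p \<in> bwcoc (primary C p) (primary A p)" and p: "prime p"
  shows "csub (primary C p) (F p) (primary_cocycle C A (sum_cocycle C F) p) \<in> bcoc (primary C p) (primary A p)"
  unfolding bcoc_def
proof (intro CollectI conjI is_cobd_onI[where \<phi> = "cyclic_root A (sum_cocycle C F) p"])
  have c: "sum_cocycle C F \<in> bwcoc C A"
    using sum_cocycle_bwcoc[OF F_bwcoc] .
  show "csub (primary C p) (F p) (primary_cocycle C A (sum_cocycle C F) p) \<in> zcoc (primary C p) (primary A p)"
    using zcoc_csub[OF primary_C_subgrp primary_A_subgrp F_zcoc[OF p] primary_cocycle_zcoc[OF c p]] .
  fix z assume z: "z \<in> primary C p"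
  have "cyclic_sum (sum_cocycle C F) p z \<in> primary A p"
    unfolding cyclic_sum_def
  proof (rule subgrp_sum[OF primary_A_subgrp])
    fix i
    have "nsmul i z \<in> primary C p"
      using subgrp_nsmul[OF primary_C_subgrp z] .
    then show "sum_cocycle C F (nsmul i z, z) \<in> primary A p"
      using sum_cocycle_primary[OF p _ z] zcoc_in[OF F_zcoc[OF p] _ z] by simp
  qed
  then show "cyclic_root A (sum_cocycle C F) p z \<in> primary A p"
    using cyclic_root[OF c p z]
      primary_if_nsmul_primary[of "cyclic_root A (sum_cocycle C F) p z" A p "ord_exponent p z"]
    by simp
next
  fix x y assume xy: "x \<in> primary C p" "y \<in> primary C p"
  moreover have "x + y \<in> primary C p"
    using xy primary_C_subgrp subgrp_add by blast
  ultimately show "csub (primary C p) (F p) (primary_cocycle C A (sum_cocycle C F) p) (x, y)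
      = cyclic_root A (sum_cocycle C F) p y - cyclic_root A (sum_cocycle C F) p (x + y)
        + cyclic_root A (sum_cocycle C F) p x"
    using sum_cocycle_primary[OF p xy] by (simp add: csub_def primary_cocycle_apply)
qed

end

lemma primary_decomp_surj:
  assumes F: "F \<in> prod_bw C A"
  shows "\<exists>c\<in>bwcoc C A. psub C F (primary_decomp C A c) \<in> prod_b C A"
proof
  have F_bwcoc: "F p \<in> bwcoc (primary C p) (primary A p)" if "prime p" for p
    using PiE_mem[OF F[unfolded prod_bw_def], of p] that by (simp add: primes_set_def)
  then have F_zcoc: "F p \<in> zcoc (primary C p) (primary A p)" if "prime p" for p
    using that bwcoc_zcoc by blast
  show "sum_cocycle C F \<in> bwcoc C A"
    using sum_cocycle_bwcoc[OF F_zcoc F_bwcoc] .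
  show "psub C F (primary_decomp C A (sum_cocycle C F)) \<in> prod_b C A"
    unfolding prod_b_def psub_def primary_decomp_def primes_set_def
    using primary_cocycle_sum_cocycle[OF F_zcoc F_bwcoc] by simp
qed

end

section \<open>Borel measurability\<close>

lemma sets_PiM_cylinder:
  assumes "finite J" "J \<subseteq> I" "\<And>j. j \<in> J \<Longrightarrow> r j \<in> B"
  shows "{c \<in> space (PiM I (\<lambda>_. count_space B)). \<forall>j\<in>J. c j = r j} \<in> sets (PiM I (\<lambda>_. count_space B))"
proof (rule sets.sets_Collect_finite_All[OF _ assms(1)])
  fix j assume j: "j \<in> J"
  then have "(\<lambda>c. c j) -` {r j} \<inter> space (PiM I (\<lambda>_. count_space B)) \<in> sets (PiM I (\<lambda>_. count_space B))"
    using measurable_sets[OF measurable_component_singleton[of j I], of "{r j}" "\<lambda>_. count_space B"]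
      assms(2,3) by auto
  moreover have "{c \<in> space (PiM I (\<lambda>_. count_space B)). c j = r j}
      = (\<lambda>c. c j) -` {r j} \<inter> space (PiM I (\<lambda>_. count_space B))"
    by auto
  ultimately show "{c \<in> space (PiM I (\<lambda>_. count_space B)). c j = r j} \<in> sets (PiM I (\<lambda>_. count_space B))"
    by simp
qed

lemma sets_vimage_finite_dependence:
  fixes h :: "('i \<Rightarrow> 'b) \<Rightarrow> 'z"
  assumes J: "finite J" "J \<subseteq> I" and B: "countable B"
    and dep: "\<And>c c'. \<forall>j\<in>J. c j = c' j \<Longrightarrow> h c = h c'"
  shows "h -` T \<inter> space (PiM I (\<lambda>_. count_space B)) \<in> sets (PiM I (\<lambda>_. count_space B))"
proof -
  let ?M = "PiM I (\<lambda>_. count_space B)"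
  define R where "R = (\<lambda>c. restrict c J) ` (h -` T \<inter> space ?M)"
  have R: "R \<subseteq> (\<Pi>\<^sub>E j\<in>J. B)"
    unfolding R_def using J by (auto simp: space_PiM PiE_def Pi_def)
  then have "countable R"
    using countable_subset[OF R countable_PiE[OF J(1)]] B by blast
  have "h -` T \<inter> space ?M = {c \<in> space ?M. \<exists>r\<in>R. \<forall>j\<in>J. c j = r j}"
  proof (intro equalityI subsetI)
    fix c assume c: "c \<in> h -` T \<inter> space ?M"
    then have "restrict c J \<in> R"
      unfolding R_def by blast
    with c show "c \<in> {c \<in> space ?M. \<exists>r\<in>R. \<forall>j\<in>J. c j = r j}"
      by (auto intro!: bexI[of _ "restrict c J"])
  next
    fix c assume c: "c \<in> {c \<in> space ?M. \<exists>r\<in>R. \<forall>j\<in>J. c j = r j}"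
    then obtain c' where c': "c' \<in> h -` T \<inter> space ?M" "\<forall>j\<in>J. c j = c' j"
      unfolding R_def by auto
    have "h c = h c'"
      using dep[OF c'(2)] .
    then show "c \<in> h -` T \<inter> space ?M"
      using c c' by auto
  qed
  also have "\<dots> \<in> sets ?M"
  proof (rule sets.sets_Collect_countable_Ex'[OF _ \<open>countable R\<close>])
    fix r assume "r \<in> R"
    then show "{c \<in> space ?M. \<forall>j\<in>J. c j = r j} \<in> sets ?M"
      using R J by (intro sets_PiM_cylinder) (auto simp: PiE_def Pi_def)
  qed
  finally show ?thesis .
qed

definition cyclic_pairs :: "nat \<Rightarrow> 'c::ab_group_add \<Rightarrow> ('c \<times> 'c) set" where
  "cyclic_pairs p z = (\<lambda>i. (nsmul i z, z)) ` {..<p ^ ord_exponent p z}"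

lemma cyclic_root_cong:
  "\<forall>j\<in>cyclic_pairs p z. c j = c' j \<Longrightarrow> cyclic_root A c p z = cyclic_root A c' p z"
  unfolding cyclic_root_def cyclic_sum_def cyclic_pairs_def by simp

context pext_decomp
begin

lemma primary_cocycle_entry_measurable:
  assumes A: "countable A" and p: "prime p" and xy: "x \<in> primary C p" "y \<in> primary C p"
  shows "(\<lambda>c. primary_cocycle C A c p (x, y))
    \<in> measurable (restrict_space (cocM C A) (bwcoc C A)) (count_space (primary A p))"
proof -
  let ?M = "PiM (C \<times> C) (\<lambda>_. count_space A)"
  let ?h = "\<lambda>c. primary_cocycle C A c p (x, y)"
  define J where "J = {(x, y)} \<union> cyclic_pairs p x \<union> cyclic_pairs p y \<union> cyclic_pairs p (x + y)"
  have "x + y \<in> primary C p"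
    using xy primary_C_subgrp subgrp_add by blast
  then have "J \<subseteq> C \<times> C"
    unfolding J_def cyclic_pairs_def using xy in_C_if_primary subgrp_nsmul[OF C_subgrp] by auto
  moreover have "finite J"
    unfolding J_def cyclic_pairs_def by simp
  moreover have "?h c = ?h c'" if "\<forall>j\<in>J. c j = c' j" for c c'
    using that cyclic_root_cong[of p x c c' A] cyclic_root_cong[of p y c c' A]
      cyclic_root_cong[of p "x + y" c c' A] xy
    unfolding J_def by (simp add: primary_cocycle_apply)
  ultimately have "?h -` {a} \<inter> space ?M \<in> sets ?M" for a
    using sets_vimage_finite_dependence[of J "C \<times> C" A ?h] A by blast
  then have "?h -` {a} \<inter> space (restrict_space ?M (bwcoc C A)) \<in> sets (restrict_space ?M (bwcoc C A))" for a
    by (auto simp: sets_restrict_space space_restrict_space intro!: image_eqI[where x = "?h -` {a} \<inter> space ?M"])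
  moreover have "?h c \<in> primary A p" if "c \<in> bwcoc C A" for c
    using primary_cocycle_in[OF that p xy] .
  moreover have "countable (primary A p)"
    using countable_subset[OF primary_subset A] .
  ultimately show ?thesis
    unfolding cocM_def by (auto simp: measurable_count_space_eq_countable space_restrict_space)
qed

lemma primary_decomp_measurable:
  assumes A: "countable A"
  shows "primary_decomp C A \<in> measurable (restrict_space (cocM C A) (bwcoc C A)) (prodM C A)"
proof -
  let ?N = "restrict_space (cocM C A) (bwcoc C A)"
  have space_N: "space ?N = bwcoc C A \<inter> space (cocM C A)"
    by (simp add: space_restrict_space)
  have coord: "(\<lambda>c. primary_cocycle C A c p) \<in> measurable ?N (cocM (primary C p) (primary A p))"
    if p: "prime p" for p
    unfolding cocM_def[of "primary C p" "primary A p"]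
  proof (rule measurable_PiM_single')
    show "(\<lambda>c. primary_cocycle C A c p z) \<in> measurable ?N (count_space (primary A p))"
      if "z \<in> primary C p \<times> primary C p" for z
      using that primary_cocycle_entry_measurable[OF A p] by auto
    show "(\<lambda>c. primary_cocycle C A c p) \<in> space ?N \<rightarrow> (\<Pi>\<^sub>E z\<in>primary C p \<times> primary C p. space (count_space (primary A p)))"
      using primary_cocycle_zcoc[OF _ p] space_N unfolding zcoc_def by auto
  qed
  show ?thesis
    unfolding prodM_def
  proof (intro measurable_PiM_single')
    show "(\<lambda>c. primary_decomp C A c p) \<in> measurable ?N (cocM (primary C p) (primary A p))"
      if "p \<in> primes_set" for p
      using coord that unfolding primary_decomp_def primes_set_def by simp
  next
    show "primary_decomp C A \<in> space ?N \<rightarrow> (\<Pi>\<^sub>E p\<in>primes_set. space (cocM (primary C p) (primary A p)))"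
      using primary_cocycle_zcoc space_N unfolding primary_decomp_def cocM_def zcoc_def primes_set_def
      by (auto simp: space_PiM)
  qed
qed

end

theorem lemma4p6:
  fixes C :: "'c::ab_group_add set" and A :: "'a::ab_group_add set"
  assumes "subgrp C" "countable C" "torsion_grp C"
    and "subgrp A" "countable A"
  shows "\<exists>f. bdef_iso (cocM C A) (bwcoc C A) (bcoc C A) (cadd C) (csub C)
                      (prodM C A) (prod_bw C A) (prod_b C A) (padd C) (psub C) f"
proof -
  interpret pext_decomp C A
    by unfold_locales (use assms in auto)
  have "bdef_iso (cocM C A) (bwcoc C A) (bcoc C A) (cadd C) (csub C)
      (prodM C A) (prod_bw C A) (prod_b C A) (padd C) (psub C) (primary_decomp C A)"
    unfolding bdef_iso_def
  proof (intro conjI ballI)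
    show "primary_decomp C A \<in> measurable (restrict_space (cocM C A) (bwcoc C A)) (prodM C A)"
      using primary_decomp_measurable[OF assms(5)] .
    fix c d assume "c \<in> bwcoc C A" "d \<in> bwcoc C A"
    then show "primary_decomp C A c \<in> prod_bw C A"
      and "csub C c d \<in> bcoc C A \<longleftrightarrow> psub C (primary_decomp C A c) (primary_decomp C A d) \<in> prod_b C A"
      and "psub C (primary_decomp C A (cadd C c d)) (padd C (primary_decomp C A c) (primary_decomp C A d))
        \<in> prod_b C A"
      by (simp_all add: primary_decomp_in_prod_bw primary_decomp_csub_iff primary_decomp_cadd)
  next
    fix F assume "F \<in> prod_bw C A"
    then show "\<exists>c\<in>bwcoc C A. psub C F (primary_decomp C A c) \<in> prod_b C A"
      by (rule primary_decomp_surj)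
  qed
  then show ?thesis
    by blast
qed

end
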